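(* Let $f\in C(\Omega)$ with $f\ge 0$ in $\Omega$, and let $u$ be a viscosity solution of the Bellman equation $H(D^2u(x),f(x))=0$ in $\Omega$. Then $u$ is a viscosity solution of the Monge–Ampère equation $M(D^2u(x),f(x))=0$ in $\Omega$ on the set of convex functions (in particular $u$ is convex).
   Context: Let $d\ge 2$ and let $\Omega\subset\mathbb R^d$ be a bounded open strictly convex domain. $\mathbb S$ denotes the set of real symmetric $d\times d$ matrices, $\mathbb S_+=\{A\in\mathbb S: A\ge 0\}$ (positive semidefinite matrices), $\mathbb S_1=\{B\in\mathbb S_+:\operatorname{tr}B=1\}$, and $A:B=\operatorname{tr}(A^TB)$ is the Frobenius inner product. For $A\in\mathbb S$ and $f\in[0,\infty)$ define the Bellman operator $H(A,f)=\sup_{B\in\mathbb S_1}\bigl(-B:A+f\sqrt[d]{\det B}\bigr)$ and the Monge–Ampère operator $M(A,f)=(f/d)^d-\det A$. $\mathrm{USC}(G)$, $\mathrm{LSC}(G)$ denote upper/lower semicontinuous functions on $G$. Viscosity notions: for $F:\mathbb S\times\Omega\to\mathbb R$ (here $F(A,x)=H(A,f(x))$ or $F(A,x)=M(A,f(x))$), a function $u\in\mathrm{USC}(\Omega)$ (resp. $u\in\mathrm{LSC}(\Omega)$) is a viscosity subsolution (resp. supersolution) of $F(D^2u(x),x)=0$ in $\Omega$ if for every $\varphi\in C^2(\Omega)$ such that $u-\varphi$ has a local maximum (resp. minimum) at $x\in\Omega$ one has $F(D^2\varphi(x),x)\le 0$ (resp. $\ge 0$); a viscosity solution is both a sub-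 and a supersolution. The function $u$ is a viscosity subsolution (resp. supersolution) on the set of convex functions if $u$ is convex and the same inequality holds for every convex $\varphi\in C^2(\Omega)$ such that $u-\varphi$ has a local maximum (resp. minimum) at $x\in\Omega$; a viscosity solution on the set of convex functions is both. *)

theory Defs
  imports "HOL-Analysis.Analysis"
begin

type_synonym 'n mat = "real^'n^'n"

definition sym_mat :: "'n::finite mat \<Rightarrow> bool" where
  "sym_mat A \<longleftrightarrow> transpose A = A"

definition psd_mat :: "'n::finite mat \<Rightarrow> bool" where
  "psd_mat A \<longleftrightarrow> sym_mat A \<and> (\<forall>x. 0 \<le> x \<bullet> (A *v x))"

definition S1 :: "'n::finite mat set" where
  "S1 = {B. psd_mat B \<and> trace B = 1}"

definition frob :: "'n::finite mat \<Rightarrow> 'n mat \<Rightarrow> real" where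
  "frob A B = trace (transpose A ** B)"

definition bellmanH :: "'n::finite mat \<Rightarrow> real \<Rightarrow> real" where
  "bellmanH A f = (SUP B\<in>(S1::'n mat set). - frob B A + f * root CARD('n) (det B))"

definition mongeM :: "'n::finite mat \<Rightarrow> real \<Rightarrow> real" where
  "mongeM A f = (f / real CARD('n)) ^ CARD('n) - det A"

definition strictly_convex_set :: "(real^'n::finite) set \<Rightarrow> bool" where
  "strictly_convex_set \<Omega> \<longleftrightarrow> convex \<Omega> \<and>
     (\<forall>x\<in>closure \<Omega>. \<forall>y\<in>closure \<Omega>. x \<noteq> y \<longrightarrow> open_segment x y \<subseteq> \<Omega>)"

definition usc_on :: "(real^'n::finite) set \<Rightarrow> (real^'n \<Rightarrow> real) \<Rightarrow> bool" where
  "usc_on G u \<longleftrightarrow> (\<forall>x\<in>G. \<forall>t. u x < t \<longrightarrow> (\<forall>\<^sub>F y in at x within G. u y < t))"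

definition lsc_on :: "(real^'n::finite) set \<Rightarrow> (real^'n \<Rightarrow> real) \<Rightarrow> bool" where
  "lsc_on G u \<longleftrightarrow> (\<forall>x\<in>G. \<forall>t. t < u x \<longrightarrow> (\<forall>\<^sub>F y in at x within G. t < u y))"

definition C2_on :: "(real^'n::finite) set \<Rightarrow> (real^'n \<Rightarrow> real) \<Rightarrow>
    (real^'n \<Rightarrow> real^'n) \<Rightarrow> (real^'n \<Rightarrow> 'n mat) \<Rightarrow> bool" where
  "C2_on G phi Dphi D2phi \<longleftrightarrow>
     (\<forall>x\<in>G. (phi has_derivative (\<lambda>h. Dphi x \<bullet> h)) (at x)) \<and>
     (\<forall>x\<in>G. (Dphi has_derivative (\<lambda>h. D2phi x *v h)) (at x)) \<and>
     continuous_on G D2phi"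

definition local_max_at :: "(real^'n::finite) set \<Rightarrow> (real^'n \<Rightarrow> real) \<Rightarrow> real^'n \<Rightarrow> bool" where
  "local_max_at G g x \<longleftrightarrow> (\<exists>e>0. \<forall>y\<in>G \<inter> ball x e. g y \<le> g x)"

definition local_min_at :: "(real^'n::finite) set \<Rightarrow> (real^'n \<Rightarrow> real) \<Rightarrow> real^'n \<Rightarrow> bool" where
  "local_min_at G g x \<longleftrightarrow> (\<exists>e>0. \<forall>y\<in>G \<inter> ball x e. g x \<le> g y)"

definition visc_sub :: "(real^'n::finite) set \<Rightarrow> ('n mat \<Rightarrow> real^'n \<Rightarrow> real) \<Rightarrow> (real^'n \<Rightarrow> real) \<Rightarrow> bool" where
  "visc_sub G F u \<longleftrightarrow> usc_on G u \<and>
     (\<forall>phi Dphi D2phi x. C2_on G phi Dphi D2phi \<and> x \<in> G \<and> local_max_at G (\<lambda>y. u y - phi y) x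
        \<longrightarrow> F (D2phi x) x \<le> 0)"

definition visc_super :: "(real^'n::finite) set \<Rightarrow> ('n mat \<Rightarrow> real^'n \<Rightarrow> real) \<Rightarrow> (real^'n \<Rightarrow> real) \<Rightarrow> bool" where
  "visc_super G F u \<longleftrightarrow> lsc_on G u \<and>
     (\<forall>phi Dphi D2phi x. C2_on G phi Dphi D2phi \<and> x \<in> G \<and> local_min_at G (\<lambda>y. u y - phi y) x
        \<longrightarrow> F (D2phi x) x \<ge> 0)"

definition visc_sol :: "(real^'n::finite) set \<Rightarrow> ('n mat \<Rightarrow> real^'n \<Rightarrow> real) \<Rightarrow> (real^'n \<Rightarrow> real) \<Rightarrow> bool" where
  "visc_sol G F u \<longleftrightarrow> visc_sub G F u \<and> visc_super G F u"

definition visc_sub_cvx :: "(real^'n::finite) set \<Rightarrow> ('n mat \<Rightarrow> real^'n \<Rightarrow> real) \<Rightarrow> (real^'n \<Rightarrow> real) \<Rightarrow> bool" where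
  "visc_sub_cvx G F u \<longleftrightarrow> usc_on G u \<and> convex_on G u \<and>
     (\<forall>phi Dphi D2phi x. C2_on G phi Dphi D2phi \<and> convex_on G phi \<and> x \<in> G \<and>
        local_max_at G (\<lambda>y. u y - phi y) x \<longrightarrow> F (D2phi x) x \<le> 0)"

definition visc_super_cvx :: "(real^'n::finite) set \<Rightarrow> ('n mat \<Rightarrow> real^'n \<Rightarrow> real) \<Rightarrow> (real^'n \<Rightarrow> real) \<Rightarrow> bool" where
  "visc_super_cvx G F u \<longleftrightarrow> lsc_on G u \<and> convex_on G u \<and>
     (\<forall>phi Dphi D2phi x. C2_on G phi Dphi D2phi \<and> convex_on G phi \<and> x \<in> G \<and>
        local_min_at G (\<lambda>y. u y - phi y) x \<longrightarrow> F (D2phi x) x \<ge> 0)"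

definition visc_sol_cvx :: "(real^'n::finite) set \<Rightarrow> ('n mat \<Rightarrow> real^'n \<Rightarrow> real) \<Rightarrow> (real^'n \<Rightarrow> real) \<Rightarrow> bool" where
  "visc_sol_cvx G F u \<longleftrightarrow> visc_sub_cvx G F u \<and> visc_super_cvx G F u"

end

theory Submission
  imports Defs
begin

text \<open>Testing the Bellman operator with the rank-one matrices \<open>v v\<^sup>T\<close>, whose determinant
  vanishes for \<open>d \<ge> 2\<close>, shows that \<open>H(A, f) \<le> 0\<close> forces \<open>A \<ge> 0\<close>. Hence every \<open>C\<^sup>2\<close> function
  touching the subsolution \<open>u\<close> from above has a positive semidefinite Hessian, and this makes \<open>u\<close>
  convex: were \<open>u\<close> strictly above one of its chords, a quadratic that is strictly concave along
  the chord would touch \<open>u\<close> from above near the chord.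

  Convex test functions have positive semidefinite Hessians \<open>A\<close>, and for those \<open>H(A, f)\<close> and
  \<open>M(A, f)\<close> have the same sign. By AM-GM, \<open>B : A \<ge> d (det A det B)\<^bsup>1/d\<^esup>\<close> for all \<open>B \<ge> 0\<close>, so
  \<open>det A > (f/d)\<^sup>d\<close> makes every term of the supremum defining \<open>H\<close> uniformly negative; conversely,
  \<open>H(A, f) \<le> 0\<close> tested with \<open>B\<close> proportional to \<open>(A + \<epsilon>I)\<^sup>-\<^sup>1\<close> gives \<open>(f/d)\<^sup>d \<le> det (A + \<epsilon>I)\<close>
  for every \<open>\<epsilon> > 0\<close>.\<close>

section \<open>Diagonal matrices and orthogonal diagonalisation\<close>

definition diag_mat :: "real^'n::finite \<Rightarrow> 'n mat" where
  "diag_mat l = (\<chi> i j. if i = j then l$i else 0)"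

definition outer_prod :: "real^'n::finite \<Rightarrow> 'n mat" where
  "outer_prod v = (\<chi> i j. v$i * v$j)"

lemma column_nth [simp]: "column k M $ i = M $ i $ k"
  by (simp add: column_def)

lemma sym_matD: "sym_mat M \<Longrightarrow> M$j$i = M$i$j"
  unfolding sym_mat_def by (metis transpose_def vec_lambda_beta)

lemma diag_mat_mult_vec: "diag_mat l *v x = (\<chi> i. l$i * x$i)"
proof -
  have "(\<Sum>j\<in>UNIV. (if i = j then l$i else 0) * x$j) = (\<Sum>j\<in>UNIV. if j = i then l$i * x$j else 0)"
    for i by (rule sum.cong) auto
  then have "(\<Sum>j\<in>UNIV. (if i = j then l$i else 0) * x$j) = l$i * x$i" for i by simp
  then show ?thesis unfolding matrix_vector_mult_def diag_mat_def by (simp add: vec_eq_iff)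
qed

lemma det_diag_mat: "det (diag_mat l) = (\<Prod>i\<in>UNIV. l$i)"
  by (subst det_diagonal) (auto simp: diag_mat_def)

lemma trace_diag_mat: "trace (diag_mat l) = (\<Sum>i\<in>UNIV. l$i)"
  by (simp add: trace_def diag_mat_def)

lemma transpose_diag_mat [simp]: "transpose (diag_mat l) = diag_mat l"
  by (simp add: transpose_def diag_mat_def vec_eq_iff)

lemma quadratic_form_diag_mat: "x \<bullet> (diag_mat l *v x) = (\<Sum>i\<in>UNIV. l$i * (x$i)^2)"
  by (simp add: diag_mat_mult_vec inner_vec_def power2_eq_square mult_ac)

lemma trace_mult_diag_mat: "trace (C ** diag_mat l) = (\<Sum>k\<in>UNIV. C$k$k * l$k)"
proof -
  have "(\<Sum>j\<in>UNIV. C$k$j * (if j = k then l$j else 0)) = (\<Sum>j\<in>UNIV. if j = k then C$k$j * l$j else 0)"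
    for k by (rule sum.cong) auto
  then have "(\<Sum>j\<in>UNIV. C$k$j * (if j = k then l$j else 0)) = C$k$k * l$k" for k by simp
  then show ?thesis by (simp add: trace_def matrix_matrix_mult_def diag_mat_def)
qed

lemma congruence_diag_entry:
  fixes G M :: "real^'n::finite^'n"
  shows "(transpose G ** M ** G)$k$k = column k G \<bullet> (M *v column k G)"
proof -
  have "(transpose G ** M ** G)$k$k = (\<Sum>j\<in>UNIV. (\<Sum>i\<in>UNIV. G$i$k * M$i$j) * G$j$k)"
    by (simp add: matrix_matrix_mult_def transpose_def)
  also have "\<dots> = (\<Sum>i\<in>UNIV. \<Sum>j\<in>UNIV. G$i$k * (M$i$j * G$j$k))"
    by (subst sum.swap) (simp add: sum_distrib_right mult.assoc)
  also have "\<dots> = column k G \<bullet> (M *v column k G)"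
    by (simp add: inner_vec_def matrix_vector_mult_def sum_distrib_left)
  finally show ?thesis .
qed

lemma quadratic_form_congruence:
  fixes Q A :: "real^'n::finite^'n"
  shows "x \<bullet> ((transpose Q ** A ** Q) *v x) = (Q *v x) \<bullet> (A *v (Q *v x))"
  by (metis dot_lmul_matrix inner_commute matrix_vector_mul_assoc transpose_matrix_vector)

lemma orthogonal_matrixD:
  "orthogonal_matrix Q \<Longrightarrow> transpose Q ** Q = mat 1 \<and> Q ** transpose Q = mat 1"
  by (simp add: orthogonal_matrix_def)

lemma det_orthogonal_congruence:
  fixes Q X :: "real^'n::finite^'n"
  assumes "orthogonal_matrix Q"
  shows "det (Q ** X ** transpose Q) = det X" "det (transpose Q ** X ** Q) = det X"
  using det_orthogonal_matrix[OF assms] by (auto simp: det_mul)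

lemma trace_orthogonal_congruence:
  fixes Q X :: "real^'n::finite^'n"
  assumes "orthogonal_matrix Q"
  shows "trace (Q ** X ** transpose Q) = trace X" "trace (transpose Q ** X ** Q) = trace X"
  using assms trace_mul_sym[of "Q ** X" "transpose Q"] trace_mul_sym[of "transpose Q ** X" Q]
  by (simp_all add: matrix_mul_assoc orthogonal_matrixD)

lemma sym_mat_congruence:
  fixes Q X :: "real^'n::finite^'n"
  assumes "sym_mat X" shows "sym_mat (transpose Q ** X ** Q)"
  using assms unfolding sym_mat_def by (simp add: matrix_transpose_mul matrix_mul_assoc)

lemma orthogonal_congruence_cancel:
  fixes Q D :: "real^'n::finite^'n"
  assumes "orthogonal_matrix Q"
  shows "transpose Q ** (Q ** D ** transpose Q) ** Q = D"
proof -
  have "transpose Q ** (Q ** D ** transpose Q) ** Q = (transpose Q ** Q) ** D ** (transpose Q ** Q)"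
    by (simp add: matrix_mul_assoc)
  then show ?thesis using assms by (simp add: orthogonal_matrixD)
qed

text \<open>A plane rotation by half the angle \<open>t\<close> with \<open>(cos t, sin t) = (a - c, 2b) / r\<close>,
  \<open>r = sqrt ((a - c)\<^sup>2 + 4b\<^sup>2)\<close>, diagonalises the symmetric block \<open>[[a, b], [b, c]]\<close>, which strictly increases the sum
  of squares of the diagonal.\<close>
lemma plane_rotation_increases_diagonal:
  fixes a b c :: real
  assumes "b \<noteq> 0"
  obtains co si where "co^2 + si^2 = 1"
    "a^2 + c^2 < (co*(co*a + si*b) + si*(co*b + si*c))^2
                 + ((-si)*((-si)*a + co*b) + co*((-si)*b + co*c))^2"
proof -
  define r where "r = sqrt ((a-c)^2 + 4*b^2)"
  have r2: "r^2 = (a-c)^2 + 4*b^2" unfolding r_def by simp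
  have rpos: "r > 0" unfolding r_def using assms by (simp add: add_nonneg_pos)
  have "((a-c)/r)^2 + (2*b/r)^2 = 1"
    using rpos by (simp add: power_divide field_simps r2[symmetric])
  then obtain t where t: "(a-c)/r = cos t" "2*b/r = sin t"
    using sincos_total_2pi_le by metis
  define co where "co = cos (t/2)"
  define si where "si = sin (t/2)"
  have double: "co^2 - si^2 = (a-c)/r" "2* co* si = 2*b/r"
    unfolding co_def si_def t using cos_double[of "t/2"] sin_double[of "t/2"] by simp_all
  have one: "co^2 + si^2 = 1" unfolding co_def si_def by simp
  define x where "x = co*(co*a + si*b) + si*(co*b + si*c)"
  define y where "y = (-si)*((-si)*a + co*b) + co*((-si)*b + co*c)"
  have "x + y = (co^2 + si^2) * (a + c)" unfolding x_def y_def by (simp add: power2_eq_square algebra_simps)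
  then have sum: "x + y = a + c" using one by simp
  have "x - y = (co^2 - si^2)*(a-c) + 2*(2* co* si)*b"
    unfolding x_def y_def by (simp add: power2_eq_square algebra_simps)
  also have "\<dots> = r" unfolding double using rpos r2 by (simp add: field_simps power2_eq_square)
  finally have diff: "x - y = r" .
  have "a^2 + c^2 = ((a+c)^2 + (a-c)^2)/2" by (simp add: power2_eq_square algebra_simps)
  also have "\<dots> < ((a+c)^2 + r^2)/2" using r2 assms by simp
  also have "\<dots> = ((x+y)^2 + (x-y)^2)/2" by (simp only: sum diff)
  also have "\<dots> = x^2 + y^2" by (simp add: power2_eq_square algebra_simps)
  finally show ?thesis using that one unfolding x_def y_def by blast
qed

lemma off_diagonal_rotation:
  fixes M :: "real^'n::finite^'n"
  assumes sym: "sym_mat M" and ij: "i \<noteq> j" and nz: "M$i$j \<noteq> 0"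
  obtains G where "orthogonal_matrix G"
    "(\<Sum>k\<in>UNIV. (M$k$k)^2) < (\<Sum>k\<in>UNIV. ((transpose G ** M ** G)$k$k)^2)"
proof -
  obtain co si where one: "co^2 + si^2 = 1" and increase:
    "(M$i$i)^2 + (M$j$j)^2 < (co*(co*M$i$i + si*M$i$j) + si*(co*M$i$j + si*M$j$j))^2
       + ((-si)*((-si)*M$i$i + co*M$i$j) + co*((-si)*M$i$j + co*M$j$j))^2"
    using plane_rotation_increases_diagonal[OF nz] by blast
  define col where "col k = (if k = i then co *\<^sub>R axis i 1 + si *\<^sub>R axis j 1
      else if k = j then (-si) *\<^sub>R axis i 1 + co *\<^sub>R axis j 1 else (axis k 1::real^'n))" for k
  define G :: "real^'n^'n" where "G = (\<chi> r k. col k $ r)"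
  have colG: "column k G = col k" for k by (simp add: G_def column_def vec_eq_iff)
  have orth: "orthogonal_matrix G"
    unfolding orthogonal_matrix_orthonormal_columns colG norm_eq_1
  proof (intro conjI allI impI)
    show "col k \<bullet> col k = 1" for k
      using ij one by (simp add: col_def inner_add_left inner_add_right inner_diff_left
          inner_diff_right inner_axis_axis power2_eq_square)
    show "orthogonal (col k) (col l)" if "k \<noteq> l" for k l
      using ij that by (auto simp: orthogonal_def col_def inner_add_left inner_add_right
          inner_diff_left inner_diff_right inner_axis_axis)
  qed
  have Mji: "M$j$i = M$i$j" using sym_matD[OF sym] .
  let ?N = "transpose G ** M ** G"
  have Nk: "?N$k$k = M$k$k" if "k \<noteq> i" "k \<noteq> j" for k
    using that unfolding congruence_diag_entry colG
    by (simp add: col_def matrix_vector_mult_basis inner_axis')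
  have Ni: "?N$i$i = co*(co*M$i$i + si*M$i$j) + si*(co*M$i$j + si*M$j$j)"
   and Nj: "?N$j$j = (-si)*((-si)*M$i$i + co*M$i$j) + co*((-si)*M$i$j + co*M$j$j)"
    using ij Mji unfolding congruence_diag_entry colG
    by (simp_all add: col_def matrix_vector_right_distrib matrix_vector_mult_scaleR
        matrix_vector_mult_diff_distrib matrix_vector_mult_basis inner_add_left inner_add_right inner_diff_left inner_diff_right inner_axis')
  have split: "(\<Sum>k\<in>UNIV. h k) = h i + h j + (\<Sum>k\<in>UNIV - {i} - {j}. h k)" for h :: "'n \<Rightarrow> real"
  proof -
    have "(\<Sum>k\<in>UNIV - {i}. h k) = h j + (\<Sum>k\<in>UNIV - {i} - {j}. h k)"
      using ij by (intro sum.remove) auto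
    then show ?thesis by (simp add: sum.remove[of UNIV i])
  qed
  have rest: "(\<Sum>k\<in>UNIV - {i} - {j}. (?N$k$k)^2) = (\<Sum>k\<in>UNIV - {i} - {j}. (M$k$k)^2)"
    by (rule sum.cong) (auto simp: Nk)
  have "(\<Sum>k\<in>UNIV. (M$k$k)^2) < (\<Sum>k\<in>UNIV. (?N$k$k)^2)"
    unfolding split[of "\<lambda>k. (M$k$k)^2"] split[of "\<lambda>k. (?N$k$k)^2"] rest Ni Nj
    using increase by linarith
  with orth show ?thesis by (rule that)
qed

text \<open>Jacobi's argument: an orthogonal congruence maximising the sum of squares of the
  diagonal (it exists by compactness of the orthogonal group) leaves no off-diagonal entry.\<close>
theorem sym_mat_orthogonal_diagonalization:
  fixes A :: "'n::finite mat"
  assumes symA: "sym_mat A"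
  obtains Q l where "orthogonal_matrix Q" "A = Q ** diag_mat l ** transpose Q"
proof -
  define Og where "Og = {Q::real^'n^'n. transpose Q ** Q = mat 1}"
  define D where "D = (\<lambda>Q::real^'n^'n. \<Sum>k\<in>UNIV. ((transpose Q ** A ** Q)$k$k)^2)"
  have TQQ: "transpose Q ** Q = (\<chi> i j. \<Sum>k\<in>UNIV. Q$k$i * Q$k$j)" for Q :: "real^'n^'n"
    by (simp add: matrix_matrix_mult_def transpose_def)
  have "closed Og"
    unfolding Og_def TQQ by (intro closed_Collect_eq continuous_on_vec_lambda continuous_intros)
  moreover have "norm Q = sqrt (real CARD('n))" if "Q \<in> Og" for Q
  proof -
    have "(norm Q)^2 = (\<Sum>i\<in>UNIV. \<Sum>j\<in>UNIV. (Q$i$j)^2)"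
      by (simp only: power2_norm_eq_inner) (simp add: inner_vec_def power2_eq_square)
    also have "\<dots> = (\<Sum>j\<in>UNIV. \<Sum>i\<in>UNIV. (Q$i$j)^2)" by (rule sum.swap)
    also have "\<dots> = (\<Sum>j\<in>UNIV. (transpose Q ** Q)$j$j)" by (simp add: TQQ power2_eq_square)
    also have "\<dots> = real CARD('n)" using that by (simp add: Og_def mat_def)
    finally show ?thesis by (simp add: real_sqrt_unique)
  qed
  then have "bounded Og" unfolding bounded_iff by (metis order_refl)
  ultimately have "compact Og" by (simp add: compact_eq_bounded_closed)
  moreover have "continuous_on Og D"
    unfolding D_def congruence_diag_entry inner_vec_def matrix_vector_mult_def column_nth
    by (intro continuous_intros)
  moreover have "mat 1 \<in> Og" by (simp add: Og_def)
  ultimately obtain Q0 where Q0: "Q0 \<in> Og" "\<And>Q. Q \<in> Og \<Longrightarrow> D Q \<le> D Q0"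
    using continuous_attains_sup[of Og D] by blast
  have oQ0: "orthogonal_matrix Q0" using Q0(1) by (simp add: Og_def orthogonal_matrix)
  define M where "M = transpose Q0 ** A ** Q0"
  have diagM: "M$i$j = 0" if "i \<noteq> j" for i j
  proof (rule ccontr)
    assume "M$i$j \<noteq> 0"
    with off_diagonal_rotation[OF _ that] obtain G where G: "orthogonal_matrix G"
      "(\<Sum>k\<in>UNIV. (M$k$k)^2) < (\<Sum>k\<in>UNIV. ((transpose G ** M ** G)$k$k)^2)"
      using sym_mat_congruence[OF symA] unfolding M_def by blast
    have "Q0 ** G \<in> Og"
      using orthogonal_matrix_mul[OF oQ0 G(1)] by (simp add: Og_def orthogonal_matrix)
    moreover have "transpose (Q0 ** G) ** A ** (Q0 ** G) = transpose G ** M ** G"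
      by (simp add: M_def matrix_transpose_mul matrix_mul_assoc)
    ultimately show False using G(2) Q0(2)[of "Q0 ** G"] by (simp add: D_def M_def)
  qed
  have "M = diag_mat (\<chi> k. M$k$k)" using diagM by (auto simp: vec_eq_iff diag_mat_def)
  moreover have "Q0 ** M ** transpose Q0 = (Q0 ** transpose Q0) ** A ** (Q0 ** transpose Q0)"
    by (simp add: M_def matrix_mul_assoc)
  then have "Q0 ** M ** transpose Q0 = A" using oQ0 by (simp add: orthogonal_matrixD)
  ultimately show ?thesis using that oQ0 by metis
qed

section \<open>Positive semidefinite matrices\<close>

lemma psd_mat_congruence:
  fixes Q X :: "real^'n::finite^'n"
  assumes "psd_mat X" shows "psd_mat (transpose Q ** X ** Q)"
  using assms sym_mat_congruence[of X Q] unfolding psd_mat_def by (simp add: quadratic_form_congruence)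

lemma psd_diag_mat: "(\<And>k. 0 \<le> l$k) \<Longrightarrow> psd_mat (diag_mat l)"
  unfolding psd_mat_def sym_mat_def by (simp add: quadratic_form_diag_mat sum_nonneg)

lemma psd_mat_diag_nonneg:
  assumes "psd_mat B" shows "0 \<le> B$k$k"
proof -
  have "0 \<le> axis k 1 \<bullet> (B *v axis k 1)" using assms by (simp add: psd_mat_def)
  then show ?thesis by (simp add: matrix_vector_mult_basis inner_axis')
qed

lemma psd_mat_orthogonal_diagonalization:
  assumes "psd_mat B"
  obtains Q l where "orthogonal_matrix Q" "B = Q ** diag_mat l ** transpose Q" "\<And>k. 0 \<le> l$k"
proof -
  obtain Q l where Q: "orthogonal_matrix Q" "B = Q ** diag_mat l ** transpose Q"
    using sym_mat_orthogonal_diagonalization assms psd_mat_def by blast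
  have "transpose Q ** B ** Q = (transpose Q ** Q) ** diag_mat l ** (transpose Q ** Q)"
    using Q by (simp add: matrix_mul_assoc)
  then have "transpose Q ** B ** Q = diag_mat l" using Q by (simp add: orthogonal_matrixD)
  then have "psd_mat (diag_mat l)" using psd_mat_congruence[OF assms, of Q] by simp
  then have "0 \<le> l$k" for k using psd_mat_diag_nonneg[of "diag_mat l" k] by (simp add: diag_mat_def)
  with Q that show ?thesis by blast
qed

lemma psd_mat_det_nonneg_root_le_trace:
  fixes B :: "'n::finite mat"
  assumes "psd_mat B"
  shows "0 \<le> det B" "real CARD('n) * root CARD('n) (det B) \<le> trace B"
proof -
  obtain Q l where Q: "orthogonal_matrix Q" "B = Q ** diag_mat l ** transpose Q" "\<And>k. 0 \<le> l$k"
    using psd_mat_orthogonal_diagonalization[OF assms] by blast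
  have dB: "det B = (\<Prod>i\<in>UNIV. l$i)"
    using Q by (simp add: det_orthogonal_congruence det_diag_mat)
  have tB: "trace B = (\<Sum>i\<in>UNIV. l$i)"
    using Q by (simp add: trace_orthogonal_congruence trace_diag_mat)
  show "0 \<le> det B" unfolding dB using Q(3) by (simp add: prod_nonneg)
  then have "root CARD('n) (det B) = (\<Prod>i\<in>UNIV. l$i) powr (1 / CARD('n))"
    by (simp add: dB root_powr_inverse)
  also have "\<dots> \<le> (\<Sum>i\<in>UNIV. l$i / CARD('n))"
    by (rule arith_geom_mean) (use Q(3) in auto)
  finally show "real CARD('n) * root CARD('n) (det B) \<le> trace B"
    by (simp add: tB field_simps flip: sum_divide_distrib)
qed

lemma frob_sym_left: "sym_mat B \<Longrightarrow> frob B A = trace (B ** A)"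
  by (simp add: frob_def sym_mat_def)

lemma frob_orthogonal_diagonalization:
  fixes B Q :: "'n::finite mat"
  assumes "sym_mat B"
  shows "frob B (Q ** diag_mat l ** transpose Q) = (\<Sum>k\<in>UNIV. (transpose Q ** B ** Q)$k$k * l$k)"
proof -
  have "frob B (Q ** diag_mat l ** transpose Q) = trace ((B ** Q ** diag_mat l) ** transpose Q)"
    using assms by (simp add: frob_sym_left matrix_mul_assoc)
  also have "\<dots> = trace ((transpose Q ** B ** Q) ** diag_mat l)"
    by (simp add: trace_mul_sym[of _ "transpose Q"] matrix_mul_assoc)
  finally show ?thesis by (simp add: trace_mult_diag_mat)
qed

text \<open>AM-GM for the positive semidefinite matrix \<open>L\<^bsup>1/2\<^esup> Q\<^sup>T B Q L\<^bsup>1/2\<^esup>\<close>, where \<open>A = Q L Q\<^sup>T\<close>.\<close>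
lemma frob_ge_det_roots:
  fixes A B :: "'n::finite mat"
  assumes psdA: "psd_mat A" and psdB: "psd_mat B"
  shows "real CARD('n) * root CARD('n) (det A) * root CARD('n) (det B) \<le> frob B A"
proof -
  obtain Q l where Q: "orthogonal_matrix Q" "A = Q ** diag_mat l ** transpose Q" "\<And>k. 0 \<le> l$k"
    using psd_mat_orthogonal_diagonalization[OF psdA] by blast
  define C where "C = transpose Q ** B ** Q"
  define s where "s = (\<chi> k. sqrt (l$k))"
  define E where "E = transpose (diag_mat s) ** C ** diag_mat s"
  have psdE: "psd_mat E" unfolding E_def C_def by (intro psd_mat_congruence psdB)
  have sk: "s$k * s$k = l$k" for k using Q(3) by (simp add: s_def)
  have "E$k$k = C$k$k * l$k" for k
  proof -
    have "column k (diag_mat s) = s$k *\<^sub>R axis k 1"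
      by (simp add: column_def diag_mat_def vec_eq_iff axis_def)
    then have "E$k$k = s$k * (s$k * C$k$k)"
      unfolding E_def congruence_diag_entry
      by (simp add: matrix_vector_mult_scaleR matrix_vector_mult_basis inner_axis')
    then show ?thesis by (simp add: sk flip: mult.assoc)
  qed
  then have "trace E = frob B A"
    using psdB Q(2) by (simp add: trace_def frob_orthogonal_diagonalization psd_mat_def C_def)
  moreover have "det E = det A * det B"
  proof -
    have "det E = (\<Prod>k\<in>UNIV. s$k) * det C * (\<Prod>k\<in>UNIV. s$k)"
      by (simp add: E_def det_mul det_diag_mat)
    also have "\<dots> = (\<Prod>k\<in>UNIV. s$k * s$k) * det B"
      using Q(1) by (simp add: C_def det_orthogonal_congruence prod.distrib)
    finally show ?thesis
      using Q by (simp add: sk det_orthogonal_congruence det_diag_mat)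
  qed
  ultimately have "real CARD('n) * root CARD('n) (det A * det B) \<le> frob B A"
    using psd_mat_det_nonneg_root_le_trace(2)[OF psdE] by simp
  then show ?thesis by (simp add: real_root_mult mult.assoc)
qed

lemma S1_frob_bounded_below:
  fixes A :: "'n::finite mat"
  assumes psdA: "psd_mat A" and dA: "det A > 0"
  obtains m where "m > 0" "\<And>B. B \<in> S1 \<Longrightarrow> m \<le> frob B A"
proof -
  obtain Q l where Q: "orthogonal_matrix Q" "A = Q ** diag_mat l ** transpose Q" "\<And>k. 0 \<le> l$k"
    using psd_mat_orthogonal_diagonalization[OF psdA] by blast
  have "det A = (\<Prod>k\<in>UNIV. l$k)" using Q by (simp add: det_orthogonal_congruence det_diag_mat)
  then have "(\<Prod>k\<in>UNIV. l$k) \<noteq> 0" using dA by linarith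
  then have "l$k \<noteq> 0" for k by simp
  then have lpos: "0 < l$k" for k using Q(3)[of k] by (simp add: order_less_le)
  define m where "m = Min (range (\<lambda>k. l$k))"
  have "m > 0" unfolding m_def by (subst Min_gr_iff) (auto simp: lpos)
  moreover have "m \<le> frob B A" if B: "B \<in> S1" for B
  proof -
    define C where "C = transpose Q ** B ** Q"
    have psdB: "psd_mat B" and tB: "trace B = 1" using B by (auto simp: S1_def)
    have "trace C = 1" using Q(1) tB by (simp add: C_def trace_orthogonal_congruence)
    then have "m = (\<Sum>k\<in>UNIV. C$k$k * m)" by (simp add: trace_def flip: sum_distrib_right)
    also have "\<dots> \<le> (\<Sum>k\<in>UNIV. C$k$k * l$k)"
    proof (rule sum_mono)
      show "C$k$k * m \<le> C$k$k * l$k" for k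
        unfolding m_def C_def
        by (intro mult_left_mono Min_le psd_mat_diag_nonneg psd_mat_congruence psdB) auto
    qed
    also have "\<dots> = frob B A"
      using psdB by (simp add: Q(2) C_def frob_orthogonal_diagonalization psd_mat_def)
    finally show ?thesis .
  qed
  ultimately show ?thesis using that by blast
qed

section \<open>The Bellman operator\<close>

lemma outer_prod_mult_vec: "outer_prod v *v x = (v \<bullet> x) *\<^sub>R v"
proof -
  have "(\<Sum>j\<in>UNIV. v$i * v$j * x$j) = (v \<bullet> x) * v$i" for i
  proof -
    have "(\<Sum>j\<in>UNIV. v$i * v$j * x$j) = v$i * (\<Sum>j\<in>UNIV. v$j * x$j)"
      by (simp add: sum_distrib_left mult.assoc)
    then show ?thesis by (simp add: inner_vec_def mult.commute)
  qed
  then show ?thesis by (simp add: outer_prod_def matrix_vector_mult_def vec_eq_iff)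
qed

lemma transpose_outer_prod [simp]: "transpose (outer_prod v) = outer_prod v"
  by (simp add: outer_prod_def transpose_def vec_eq_iff mult.commute)

lemma outer_prod_in_S1: "norm v = 1 \<Longrightarrow> outer_prod v \<in> S1"
proof -
  have "x \<bullet> (outer_prod v *v x) = (v \<bullet> x)^2" for x
    by (simp add: outer_prod_mult_vec inner_commute power2_eq_square)
  moreover have "trace (outer_prod v) = v \<bullet> v" by (simp add: trace_def outer_prod_def inner_vec_def)
  ultimately show "norm v = 1 \<Longrightarrow> outer_prod v \<in> S1"
    by (simp add: S1_def psd_mat_def sym_mat_def norm_eq_1[symmetric])
qed

lemma S1_nonempty: "(S1 :: 'n::finite mat set) \<noteq> {}"
  using outer_prod_in_S1[of "axis undefined 1 :: real^'n"] by auto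

lemma det_outer_prod:
  fixes v :: "real^'n::finite"
  assumes "2 \<le> CARD('n)"
  shows "det (outer_prod v) = 0"
proof -
  obtain j k :: 'n where jk: "j \<noteq> k"
  proof -
    have "\<not> (\<forall>j k :: 'n. j = k)"
    proof
      assume "\<forall>j k :: 'n. j = k"
      then have "(UNIV :: 'n set) = {undefined}" by auto
      then show False using assms by (metis One_nat_def card.empty card_insert_disjoint
          empty_iff finite.emptyI numeral_le_one_iff semiring_norm(69))
    qed
    then show ?thesis using that by blast
  qed
  define V :: "real^'n^'n" where "V = (\<chi> i m. if m = k then v$i else 0)"
  define W :: "real^'n^'n" where "W = (\<chi> m j. if m = k then v$j else 0)"
  have "(\<Sum>m\<in>UNIV. (if m = k then v$i else 0) * (if m = k then v$j else 0))
      = (\<Sum>m\<in>UNIV. if m = k then v$i * v$j else 0)" for i j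
    by (rule sum.cong) auto
  then have "V ** W = outer_prod v"
    by (simp add: V_def W_def outer_prod_def matrix_matrix_mult_def vec_eq_iff)
  moreover have "det V = 0"
    by (rule det_zero_column(1)[of j]) (use jk in \<open>simp add: V_def column_def vec_eq_iff\<close>)
  ultimately show ?thesis by (metis det_mul mult_zero_left)
qed

lemma frob_outer_prod: "frob (outer_prod v) A = v \<bullet> (A *v v)"
proof -
  have "frob (outer_prod v) A = trace (A ** outer_prod v)"
    unfolding frob_def transpose_outer_prod by (rule trace_mul_sym)
  also have "\<dots> = (\<Sum>i\<in>UNIV. v$i * (\<Sum>j\<in>UNIV. A$i$j * v$j))"
    by (simp add: trace_def matrix_matrix_mult_def outer_prod_def sum_distrib_left mult_ac)
  finally show ?thesis by (simp add: inner_vec_def matrix_vector_mult_def)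
qed

lemma S1_entry_abs_le:
  assumes B: "B \<in> S1" shows "\<bar>B$i$j\<bar> \<le> 1"
proof -
  have psdB: "psd_mat B" and tB: "trace B = 1" using B by (auto simp: S1_def)
  have dg: "0 \<le> B$k$k" for k using psd_mat_diag_nonneg[OF psdB] .
  show ?thesis
  proof (cases "i = j")
    case True
    have "B$i$i \<le> (\<Sum>k\<in>UNIV. B$k$k)" by (rule member_le_sum) (auto simp: dg)
    then show ?thesis using tB dg[of i] True by (simp add: trace_def)
  next
    case False
    have "(\<Sum>k\<in>{i,j}. B$k$k) \<le> (\<Sum>k\<in>UNIV. B$k$k)" by (rule sum_mono2) (auto simp: dg)
    then have s: "B$i$i + B$j$j \<le> 1" using False tB by (simp add: trace_def)
    have ji: "B$j$i = B$i$j" using psdB sym_matD by (auto simp: psd_mat_def)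
    have q: "(axis i 1 + c *\<^sub>R axis j 1) \<bullet> (B *v (axis i 1 + c *\<^sub>R axis j 1))
            = B$i$i + c * B$j$i + c * (B$i$j + c * B$j$j)" for c :: real
      using False by (simp add: matrix_vector_right_distrib matrix_vector_mult_scaleR
          matrix_vector_mult_basis inner_add_left inner_add_right inner_axis')
    have "0 \<le> B$i$i + c * B$j$i + c * (B$i$j + c * B$j$j)" for c
      using psdB q[of c] unfolding psd_mat_def by metis
    from this[of 1] this[of "-1"] show ?thesis using s ji dg[of i] dg[of j] by (simp add: abs_le_iff)
  qed
qed

lemma S1_frob_abs_le:
  fixes A :: "'n::finite mat"
  assumes B: "B \<in> S1" shows "\<bar>frob B A\<bar> \<le> (\<Sum>i\<in>UNIV. \<Sum>k\<in>UNIV. \<bar>A$k$i\<bar>)"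
proof -
  have "frob B A = (\<Sum>i\<in>UNIV. \<Sum>k\<in>UNIV. B$k$i * A$k$i)"
    by (simp add: frob_def trace_def matrix_matrix_mult_def transpose_def)
  also have "\<bar>\<dots>\<bar> \<le> (\<Sum>i\<in>UNIV. \<Sum>k\<in>UNIV. \<bar>B$k$i * A$k$i\<bar>)"
    by (rule order_trans[OF sum_abs sum_mono[OF sum_abs]])
  also have "\<dots> \<le> (\<Sum>i\<in>UNIV. \<Sum>k\<in>UNIV. \<bar>A$k$i\<bar>)"
    using S1_entry_abs_le[OF B] by (intro sum_mono) (simp add: abs_mult mult_left_le_one_le)
  finally show ?thesis .
qed

lemma S1_root_det_bounds:
  fixes B :: "'n::finite mat"
  assumes B: "B \<in> S1" shows "0 \<le> root CARD('n) (det B)" "root CARD('n) (det B) \<le> 1"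
proof -
  have psdB: "psd_mat B" and tB: "trace B = 1" using B by (auto simp: S1_def)
  show r0: "0 \<le> root CARD('n) (det B)"
    using psd_mat_det_nonneg_root_le_trace(1)[OF psdB] by simp
  have "1 * root CARD('n) (det B) \<le> real CARD('n) * root CARD('n) (det B)"
    using r0 by (intro mult_right_mono) auto
  also have "\<dots> \<le> 1" using psd_mat_det_nonneg_root_le_trace(2)[OF psdB] tB by simp
  finally show "root CARD('n) (det B) \<le> 1" by simp
qed

lemma bellmanH_bdd_above:
  fixes A :: "'n::finite mat"
  assumes "0 \<le> f"
  shows "bdd_above ((\<lambda>B. - frob B A + f * root CARD('n) (det B)) ` S1)"
proof (rule bdd_aboveI2)
  fix B :: "'n mat" assume B: "B \<in> S1"
  have "- frob B A \<le> (\<Sum>i\<in>UNIV. \<Sum>k\<in>UNIV. \<bar>A$k$i\<bar>)"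
    using S1_frob_abs_le[OF B, of A] by linarith
  moreover have "f * root CARD('n) (det B) \<le> f"
    using S1_root_det_bounds[OF B] assms by (simp add: mult_left_le)
  ultimately show "- frob B A + f * root CARD('n) (det B) \<le> (\<Sum>i\<in>UNIV. \<Sum>k\<in>UNIV. \<bar>A$k$i\<bar>) + f"
    by linarith
qed

lemma bellmanH_ge:
  fixes A :: "'n::finite mat"
  assumes "0 \<le> f" "B \<in> S1"
  shows "- frob B A + f * root CARD('n) (det B) \<le> bellmanH A f"
  unfolding bellmanH_def by (rule cSUP_upper[OF assms(2) bellmanH_bdd_above[OF assms(1)]])

lemma bellmanH_nonpos_imp_quadratic_form_nonneg:
  fixes A :: "'n::finite mat"
  assumes "2 \<le> CARD('n)" "0 \<le> f" "bellmanH A f \<le> 0"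
  shows "0 \<le> v \<bullet> (A *v v)"
proof (cases "v = 0")
  case False
  define e where "e = (1 / norm v) *\<^sub>R v"
  have "norm e = 1" using False by (simp add: e_def)
  then have "- (e \<bullet> (A *v e)) \<le> bellmanH A f"
    using bellmanH_ge[OF assms(2) outer_prod_in_S1[OF \<open>norm e = 1\<close>], of A]
    by (simp add: det_outer_prod[OF assms(1)] frob_outer_prod)
  then have "0 \<le> (1 / norm v)^2 * (v \<bullet> (A *v v))"
    using assms(3) by (simp add: e_def matrix_vector_mult_scaleR power2_eq_square)
  then show ?thesis using False by (simp add: zero_le_mult_iff)
qed simp

section \<open>Comparison with the Monge-Ampere operator\<close>

text \<open>The witness is \<open>B = Q diag(\<beta>) Q\<^sup>T\<close> with \<open>\<beta>\<^sub>k\<close> proportional to \<open>1 / (l\<^sub>k + e)\<close>, for which the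
  AM-GM step in \<open>frob_ge_det_roots\<close> is (up to the shift \<open>e\<close>) an equality.\<close>
lemma S1_bound_imp_shifted_prod_ge:
  fixes Q :: "'n::finite mat"
  assumes Q: "orthogonal_matrix Q" and l: "\<And>k. 0 \<le> l$k" and e: "0 < e" and f0: "0 \<le> f"
    and H: "\<And>B. B \<in> S1 \<Longrightarrow> f * root CARD('n) (det B) \<le> frob B (Q ** diag_mat l ** transpose Q)"
  shows "(f / CARD('n))^CARD('n) \<le> (\<Prod>k\<in>UNIV. l$k + e)"
proof -
  define d where "d = CARD('n)"
  have d0: "0 < d" unfolding d_def by simp
  have lpos: "0 < l$k + e" for k using l[of k] e by linarith
  define S where "S = (\<Sum>k\<in>UNIV. 1 / (l$k + e))"
  have Spos: "0 < S" unfolding S_def by (rule sum_pos) (auto simp: lpos)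
  define \<beta> where "\<beta> = (\<chi> k. 1 / ((l$k + e) * S))"
  have \<beta>0: "0 \<le> \<beta>$k" for k using lpos Spos by (simp add: \<beta>_def less_imp_le)
  define B where "B = Q ** diag_mat \<beta> ** transpose Q"
  have psdB: "psd_mat B"
    using psd_mat_congruence[OF psd_diag_mat[OF \<beta>0], of "transpose Q"] by (simp add: B_def)
  have "trace B = (\<Sum>k\<in>UNIV. 1 / (l$k + e)) / S"
    using Q by (simp add: B_def trace_orthogonal_congruence trace_diag_mat \<beta>_def sum_divide_distrib)
  then have "B \<in> S1" using psdB Spos by (simp add: S1_def S_def)
  have "transpose Q ** B ** Q = diag_mat \<beta>" by (simp add: B_def orthogonal_congruence_cancel[OF Q])
  then have "frob B (Q ** diag_mat l ** transpose Q) = (\<Sum>k\<in>UNIV. \<beta>$k * l$k)"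
    using psdB frob_orthogonal_diagonalization[of B Q l] by (simp add: psd_mat_def diag_mat_def)
  also have "\<dots> \<le> (\<Sum>k\<in>UNIV. \<beta>$k * (l$k + e))"
    by (rule sum_mono) (use \<beta>0 e in \<open>simp add: mult_left_mono\<close>)
  also have "\<dots> = (\<Sum>k\<in>(UNIV::'n set). 1 / S)"
  proof (rule sum.cong)
    show "\<beta>$k * (l$k + e) = 1 / S" for k using lpos[of k] by (simp add: \<beta>_def)
  qed simp
  also have "\<dots> = d / S" by (simp add: d_def)
  finally have upper: "f * root d (det B) \<le> d / S"
    using H[OF \<open>B \<in> S1\<close>] unfolding d_def by linarith
  define P where "P = (\<Prod>k\<in>UNIV. l$k + e)"
  have Ppos: "0 < P" unfolding P_def by (rule prod_pos) (simp add: lpos)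
  have "det B = (\<Prod>k\<in>UNIV. 1 / (l$k + e) * (1 / S))"
    using Q by (simp add: B_def det_orthogonal_congruence det_diag_mat \<beta>_def)
  also have "\<dots> = 1 / (P * S^d)"
    by (simp add: prod.distrib P_def d_def prod_dividef power_one_over)
  finally have "root d (det B) = 1 / (root d P * S)"
    using d0 Spos by (simp add: real_root_divide real_root_mult real_root_power_cancel)
  with upper have "f / d \<le> root d P"
    using Spos d0 Ppos by (simp add: field_simps)
  then have "(f/d)^d \<le> (root d P)^d" by (rule power_mono) (use f0 in simp)
  also have "\<dots> = P" using d0 Ppos by simp
  finally show ?thesis unfolding P_def d_def .
qed

lemma det_ge_if_S1_bound:
  fixes A :: "'n::finite mat"
  assumes psdA: "psd_mat A" and f0: "0 \<le> f"
    and H: "\<And>B. B \<in> S1 \<Longrightarrow> f * root CARD('n) (det B) \<le> frob B A"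
  shows "(f / CARD('n))^CARD('n) \<le> det A"
proof -
  obtain Q l where Q: "orthogonal_matrix Q" "A = Q ** diag_mat l ** transpose Q" "\<And>k. 0 \<le> l$k"
    using psd_mat_orthogonal_diagonalization[OF psdA] by blast
  have "((\<lambda>e. \<Prod>k\<in>UNIV. l$k + e) \<longlongrightarrow> (\<Prod>k\<in>UNIV. l$k + 0)) (at_right 0)"
    by (intro tendsto_intros)
  moreover have "\<forall>\<^sub>F e in at_right 0. (f / CARD('n))^CARD('n) \<le> (\<Prod>k\<in>UNIV. l$k + e)"
    using S1_bound_imp_shifted_prod_ge[OF Q(1) Q(3) _ f0] H Q(2) eventually_at_right_less[of 0]
    by (auto elim: eventually_mono)
  ultimately have "(f / CARD('n))^CARD('n) \<le> (\<Prod>k\<in>UNIV. l$k)"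
    using tendsto_lowerbound[of _ _ "at_right (0::real)"] by fastforce
  then show ?thesis using Q by (simp add: det_orthogonal_congruence det_diag_mat)
qed

lemma bellmanH_neg_if_det_gt:
  fixes A :: "'n::finite mat"
  assumes psdA: "psd_mat A" and f0: "0 \<le> f" and gt: "(f / CARD('n))^CARD('n) < det A"
  shows "bellmanH A f < 0"
proof -
  define d where "d = CARD('n)"
  have d0: "0 < d" unfolding d_def by simp
  have "0 \<le> (f / d)^d" using f0 by simp
  then have "0 < det A" using gt by (simp add: d_def)
  then obtain m where m: "m > 0" "\<And>B. B \<in> S1 \<Longrightarrow> m \<le> frob B A"
    using S1_frob_bounded_below[OF psdA] by blast
  define rA where "rA = root d (det A)"
  have "f / d = root d ((f / d)^d)" using f0 d0 by (simp add: real_root_power_cancel)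
  also have "\<dots> < rA" unfolding rA_def using gt d0 by (simp add: d_def)
  finally have \<gamma>: "0 < d * rA - f" using d0 by (simp add: divide_less_eq mult.commute)
  define \<gamma> where "\<gamma> = d * rA - f"
  have fg: "0 < f + \<gamma>" using f0 \<gamma> by (simp add: \<gamma>_def)
  have "- frob B A + f * root d (det B) \<le> - (m * \<gamma>) / (f + \<gamma>)" if B: "B \<in> S1" for B
  proof -
    define rB where "rB = root d (det B)"
    have "0 \<le> rB" using S1_root_det_bounds(1)[OF B] by (simp add: rB_def d_def)
    have "(f + \<gamma>) * rB \<le> frob B A"
      using frob_ge_det_roots[OF psdA, of B] B by (simp add: S1_def \<gamma>_def rA_def rB_def d_def)
    then have "f * ((f + \<gamma>) * rB) \<le> f * frob B A" using f0 by (rule mult_left_mono)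
    moreover have "\<gamma> * m \<le> \<gamma> * frob B A" using m(2)[OF B] \<gamma> by (simp add: \<gamma>_def)
    ultimately have "(f + \<gamma>) * (- frob B A + f * rB) \<le> - (m * \<gamma>)"
      by (simp add: algebra_simps)
    then have "- frob B A + f * rB \<le> - (m * \<gamma>) / (f + \<gamma>)"
      by (subst pos_le_divide_eq[OF fg]) (simp add: mult.commute)
    then show ?thesis by (simp add: rB_def)
  qed
  then have "bellmanH A f \<le> - (m * \<gamma>) / (f + \<gamma>)"
    unfolding bellmanH_def d_def by (intro cSUP_least S1_nonempty)
  also have "\<dots> < 0" using m(1) \<gamma> fg by (simp add: \<gamma>_def divide_neg_pos)
  finally show ?thesis .
qed

lemma mongeM_nonpos_if_bellmanH_nonpos:
  fixes A :: "'n::finite mat"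
  assumes "psd_mat A" "0 \<le> f" "bellmanH A f \<le> 0"
  shows "mongeM A f \<le> 0"
  using det_ge_if_S1_bound[OF assms(1,2)] bellmanH_ge[OF assms(2), of _ A] assms(3)
  by (force simp: mongeM_def)

lemma mongeM_nonneg_if_bellmanH_nonneg:
  fixes A :: "'n::finite mat"
  assumes "psd_mat A" "0 \<le> f" "0 \<le> bellmanH A f"
  shows "0 \<le> mongeM A f"
  using bellmanH_neg_if_det_gt[OF assms(1,2)] assms(3) by (force simp: mongeM_def)

section \<open>Hessians of \<open>C\<^sup>2\<close> functions\<close>

lemma has_real_derivative_along_line:
  fixes \<phi> :: "real^'n::finite \<Rightarrow> real"
  assumes "(\<phi> has_derivative (\<lambda>h. g \<bullet> h)) (at (p + s *\<^sub>R u))"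
  shows "((\<lambda>s. \<phi> (p + s *\<^sub>R u)) has_real_derivative (g \<bullet> u)) (at s)"
proof -
  have "((\<lambda>s. p + s *\<^sub>R u) has_derivative (\<lambda>h. h *\<^sub>R u)) (at s)"
    by (intro derivative_eq_intros) auto
  from has_derivative_compose[OF this assms]
  have "((\<lambda>s. \<phi> (p + s *\<^sub>R u)) has_derivative (\<lambda>h. g \<bullet> (h *\<^sub>R u))) (at s)" .
  moreover have "(\<lambda>h. g \<bullet> (h *\<^sub>R u)) = (*) (g \<bullet> u)" by (auto simp: fun_eq_iff)
  ultimately show ?thesis unfolding has_field_derivative_def by simp
qed

lemma convex_on_ge_tangent:
  fixes \<phi> :: "real^'n::finite \<Rightarrow> real"
  assumes cvx: "convex_on G \<phi>" and z: "z \<in> G" and y: "y \<in> G"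
    and d: "(\<phi> has_derivative (\<lambda>h. g \<bullet> h)) (at z)"
  shows "\<phi> z + g \<bullet> (y - z) \<le> \<phi> y"
proof (rule ccontr)
  assume "\<not> ?thesis"
  then have lt: "0 < g \<bullet> (y - z) - (\<phi> y - \<phi> z)" by simp
  define k where "k s = \<phi> (z + s *\<^sub>R (y - z)) - s * (\<phi> y - \<phi> z)" for s
  have "((\<lambda>s. \<phi> (z + s *\<^sub>R (y - z))) has_real_derivative (g \<bullet> (y - z))) (at 0)"
    by (rule has_real_derivative_along_line) (use d in simp)
  then have "(k has_real_derivative (g \<bullet> (y - z) - (\<phi> y - \<phi> z))) (at 0)"
    unfolding k_def by (intro derivative_eq_intros) auto
  from DERIV_pos_inc_right[OF this lt]
  obtain dd where dd: "dd > 0" "\<And>h. 0 < h \<Longrightarrow> h < dd \<Longrightarrow> k 0 < k (0 + h)"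
    by blast
  define s where "s = min (dd/2) 1"
  have s: "0 < s" "s < dd" "s \<le> 1" using dd by (auto simp: s_def)
  have "k 0 < k s" using dd(2) s by auto
  moreover have "\<phi> ((1 - s) *\<^sub>R z + s *\<^sub>R y) \<le> (1 - s) * \<phi> z + s * \<phi> y"
    using cvx z y s unfolding convex_on_def by auto
  moreover have "(1 - s) *\<^sub>R z + s *\<^sub>R y = z + s *\<^sub>R (y - z)" by (simp add: algebra_simps)
  ultimately show False by (simp add: k_def algebra_simps)
qed

text \<open>Along the line \<open>x + t v\<close>, the directional derivative of a convex function is
  nondecreasing (add the tangent inequalities at both ends); its derivative at \<open>t = 0\<close> is
  \<open>v \<bullet> D\<^sup>2\<phi>(x) v\<close>.\<close>
lemma convex_on_hessian_nonneg:
  fixes \<phi> :: "real^'n::finite \<Rightarrow> real"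
  assumes C2: "C2_on G \<phi> D\<phi> D2\<phi>" and G: "open G" and cvx: "convex_on G \<phi>" and x: "x \<in> G"
  shows "0 \<le> v \<bullet> (D2\<phi> x *v v)"
proof (rule ccontr)
  assume "\<not> ?thesis"
  then have neg: "(D2\<phi> x *v v) \<bullet> v < 0" by (simp add: inner_commute)
  have d\<phi>: "\<And>y. y \<in> G \<Longrightarrow> (\<phi> has_derivative (\<lambda>h. D\<phi> y \<bullet> h)) (at y)"
   and dD: "(D\<phi> has_derivative (\<lambda>h. D2\<phi> x *v h)) (at x)" using C2 x unfolding C2_on_def by auto
  define g where "g t = D\<phi> (x + t *\<^sub>R v) \<bullet> v" for t
  have "((\<lambda>t. x + t *\<^sub>R v) has_derivative (\<lambda>h. h *\<^sub>R v)) (at 0)"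
    by (intro derivative_eq_intros) auto
  from has_derivative_compose[OF this] dD
  have "((\<lambda>t. D\<phi> (x + t *\<^sub>R v)) has_derivative (\<lambda>h. D2\<phi> x *v (h *\<^sub>R v))) (at 0)" by simp
  then have "(g has_derivative (\<lambda>h. (D2\<phi> x *v (h *\<^sub>R v)) \<bullet> v)) (at 0)"
    unfolding g_def by (intro derivative_eq_intros) auto
  moreover have "(\<lambda>h. (D2\<phi> x *v (h *\<^sub>R v)) \<bullet> v) = (*) ((D2\<phi> x *v v) \<bullet> v)"
    by (auto simp: fun_eq_iff matrix_vector_mult_scaleR)
  ultimately have "(g has_real_derivative ((D2\<phi> x *v v) \<bullet> v)) (at 0)"
    unfolding has_field_derivative_def by simp
  from DERIV_neg_dec_right[OF this neg]
  obtain dd where dd: "dd > 0" "\<And>h. 0 < h \<Longrightarrow> h < dd \<Longrightarrow> g (0 + h) < g 0"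
    by blast
  have "((\<lambda>t. x + t *\<^sub>R v) \<longlongrightarrow> x + 0 *\<^sub>R v) (at_right 0)"
    by (intro tendsto_intros)
  then have "\<forall>\<^sub>F t in at_right 0. x + t *\<^sub>R v \<in> G"
    using G x by (simp add: topological_tendstoD)
  moreover have "\<forall>\<^sub>F t in at_right 0. 0 < t \<and> t < dd"
    using eventually_at_right_less eventually_at_right_real[of 0 dd] dd(1) by auto
  ultimately obtain t where t: "0 < t" "t < dd" and xt: "x + t *\<^sub>R v \<in> G"
    using eventually_happens'[OF trivial_limit_at_right_real] eventually_conj by blast
  have "\<phi> x + D\<phi> x \<bullet> ((x + t *\<^sub>R v) - x) \<le> \<phi> (x + t *\<^sub>R v)"
    by (rule convex_on_ge_tangent[OF cvx x xt d\<phi>[OF x]])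
  moreover have "\<phi> (x + t *\<^sub>R v) + D\<phi> (x + t *\<^sub>R v) \<bullet> (x - (x + t *\<^sub>R v)) \<le> \<phi> x"
    by (rule convex_on_ge_tangent[OF cvx xt x d\<phi>[OF xt]])
  ultimately have "t * g 0 \<le> t * g t" by (simp add: g_def algebra_simps)
  with t dd(2)[OF t] show False by simp
qed

lemma second_difference_mean_value:
  fixes \<phi> :: "real^'n::finite \<Rightarrow> real"
  assumes d\<phi>: "\<And>y. y \<in> G \<Longrightarrow> (\<phi> has_derivative (\<lambda>h. D\<phi> y \<bullet> h)) (at y)"
    and t: "0 < t"
    and inG: "\<And>s. 0 \<le> s \<Longrightarrow> s \<le> t \<Longrightarrow> x + s *\<^sub>R u \<in> G \<and> x + t *\<^sub>R w + s *\<^sub>R u \<in> G"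
  obtains \<xi> where "0 < \<xi>" "\<xi> < t"
    "\<phi> (x + t *\<^sub>R u + t *\<^sub>R w) - \<phi> (x + t *\<^sub>R u) - \<phi> (x + t *\<^sub>R w) + \<phi> x
       = t * ((D\<phi> (x + t *\<^sub>R w + \<xi> *\<^sub>R u) - D\<phi> (x + \<xi> *\<^sub>R u)) \<bullet> u)"
proof -
  define g where "g s = \<phi> (x + t *\<^sub>R w + s *\<^sub>R u) - \<phi> (x + s *\<^sub>R u)" for s
  define g' where "g' s = (D\<phi> (x + t *\<^sub>R w + s *\<^sub>R u) - D\<phi> (x + s *\<^sub>R u)) \<bullet> u" for s
  have "(g has_real_derivative g' s) (at s)" if "0 \<le> s" "s \<le> t" for s
    unfolding g_def g'_def inner_diff_left
    using inG[OF that] by (intro DERIV_diff has_real_derivative_along_line d\<phi>) auto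
  then obtain \<xi> where "0 < \<xi>" "\<xi> < t" "g t - g 0 = (t - 0) * g' \<xi>"
    using MVT2[of 0 t g g'] t by auto
  then show ?thesis using that by (simp add: g_def g'_def algebra_simps)
qed

lemma second_difference_estimate:
  fixes \<phi> :: "real^'n::finite \<Rightarrow> real"
  assumes G: "open G" and x: "x \<in> G"
    and d\<phi>: "\<And>y. y \<in> G \<Longrightarrow> (\<phi> has_derivative (\<lambda>h. D\<phi> y \<bullet> h)) (at y)"
    and dD: "(D\<phi> has_derivative (\<lambda>h. A *v h)) (at x)" and e: "\<epsilon> > 0"
  shows "\<forall>\<^sub>F t in at_right 0.
     \<bar>\<phi> (x + t *\<^sub>R u + t *\<^sub>R w) - \<phi> (x + t *\<^sub>R u) - \<phi> (x + t *\<^sub>R w) + \<phi> x - t^2 * ((A *v w) \<bullet> u)\<bar>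
       \<le> \<epsilon> * t^2 * ((2 * norm u + norm w) * norm u)"
proof -
  obtain r where r: "r > 0" "ball x r \<subseteq> G" using G x open_contains_ball by blast
  obtain d where d: "d > 0"
    "\<And>y. norm (y - x) < d \<Longrightarrow> norm (D\<phi> y - D\<phi> x - A *v (y - x)) \<le> \<epsilon> * norm (y - x)"
    using dD e unfolding has_derivative_at_alt by blast
  define K where "K = norm u + norm w + 1"
  have K: "K > 0" unfolding K_def by (simp add: add_nonneg_pos)
  have "\<forall>\<^sub>F t in at_right 0. t \<in> {0<..<min r d / K}"
    using r(1) d(1) K by (intro eventually_at_right_real) simp
  then show ?thesis
  proof (rule eventually_mono)
    fix t assume "t \<in> {0<..<min r d / K}"
    then have t: "0 < t" "t < min r d / K" by auto
    have small: "norm (s *\<^sub>R u + \<tau> *\<^sub>R w) < min r d"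
      if "0 \<le> s" "s \<le> t" "0 \<le> \<tau>" "\<tau> \<le> t" for s \<tau>
    proof -
      have "norm (s *\<^sub>R u + \<tau> *\<^sub>R w) \<le> s * norm u + \<tau> * norm w"
        using norm_triangle_ineq[of "s *\<^sub>R u" "\<tau> *\<^sub>R w"] that by simp
      also have "\<dots> \<le> t * norm u + t * norm w"
        using that by (intro add_mono mult_right_mono) auto
      also have "\<dots> \<le> t * K" using t by (simp add: K_def algebra_simps)
      also have "\<dots> < min r d" using t K by (simp add: field_simps)
      finally show ?thesis .
    qed
    have inG: "x + s *\<^sub>R u \<in> G \<and> x + t *\<^sub>R w + s *\<^sub>R u \<in> G" if "0 \<le> s" "s \<le> t" for s
    proof -
      have ball: "x + p \<in> G" if "norm p < r" for p
        using r(2) that by (auto simp: dist_norm subset_iff)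
      have "x + (s *\<^sub>R u + 0 *\<^sub>R w) \<in> G" "x + (s *\<^sub>R u + t *\<^sub>R w) \<in> G"
        by (intro ball order.strict_trans2[OF small[OF that]]; use t in simp)+
      then show ?thesis by (simp add: add_ac)
    qed
    obtain \<xi> where \<xi>: "0 < \<xi>" "\<xi> < t" and mvt:
      "\<phi> (x + t *\<^sub>R u + t *\<^sub>R w) - \<phi> (x + t *\<^sub>R u) - \<phi> (x + t *\<^sub>R w) + \<phi> x
         = t * ((D\<phi> (x + t *\<^sub>R w + \<xi> *\<^sub>R u) - D\<phi> (x + \<xi> *\<^sub>R u)) \<bullet> u)"
      using second_difference_mean_value[OF d\<phi> t(1) inG] by blast
    define R where "R y = D\<phi> y - D\<phi> x - A *v (y - x)" for y
    define y1 where "y1 = x + t *\<^sub>R w + \<xi> *\<^sub>R u"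
    define y2 where "y2 = x + \<xi> *\<^sub>R u"
    have "norm (R y1) \<le> \<epsilon> * norm (\<xi> *\<^sub>R u + t *\<^sub>R w)"
      using d(2)[of y1] small[of \<xi> t] \<xi> t by (simp add: R_def y1_def algebra_simps)
    also have "\<dots> \<le> \<epsilon> * (t * norm u + t * norm w)"
    proof (intro mult_left_mono)
      have "\<xi> * norm u \<le> t * norm u" using \<xi> by (simp add: mult_right_mono)
      then show "norm (\<xi> *\<^sub>R u + t *\<^sub>R w) \<le> t * norm u + t * norm w"
        using norm_triangle_ineq[of "\<xi> *\<^sub>R u" "t *\<^sub>R w"] \<xi> t by simp
    qed (use e in simp)
    finally have R1: "norm (R y1) \<le> \<epsilon> * (t * norm u + t * norm w)" .
    have "norm (R y2) \<le> \<epsilon> * norm (\<xi> *\<^sub>R u)"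
      using d(2)[of y2] small[of \<xi> 0] \<xi> t by (simp add: R_def y2_def)
    also have "\<dots> \<le> \<epsilon> * (t * norm u)" using \<xi> e by (simp add: mult_right_mono)
    finally have R2: "norm (R y2) \<le> \<epsilon> * (t * norm u)" .
    have "A *v (y1 - x) - A *v (y2 - x) = t *\<^sub>R (A *v w)"
      by (simp add: y1_def y2_def flip: matrix_vector_mult_diff_distrib matrix_vector_mult_scaleR)
    then have "D\<phi> y1 - D\<phi> y2 = R y1 - R y2 + t *\<^sub>R (A *v w)"
      by (simp add: R_def algebra_simps)
    then have "(D\<phi> y1 - D\<phi> y2) \<bullet> u - t * ((A *v w) \<bullet> u) = (R y1 - R y2) \<bullet> u"
      by (simp add: inner_add_left)
    also have "\<bar>\<dots>\<bar> \<le> norm (R y1 - R y2) * norm u" by (rule Cauchy_Schwarz_ineq2)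
    also have "\<dots> \<le> (norm (R y1) + norm (R y2)) * norm u"
      by (intro mult_right_mono norm_triangle_ineq4) auto
    also have "\<dots> \<le> (\<epsilon> * (t * norm u + t * norm w) + \<epsilon> * (t * norm u)) * norm u"
      using R1 R2 by (intro mult_right_mono add_mono) auto
    also have "\<dots> = \<epsilon> * t * ((2 * norm u + norm w) * norm u)" by (simp add: algebra_simps)
    finally have "\<bar>(D\<phi> y1 - D\<phi> y2) \<bullet> u - t * ((A *v w) \<bullet> u)\<bar> \<le> \<epsilon> * t * ((2 * norm u + norm w) * norm u)" .
    then have "t * \<bar>(D\<phi> y1 - D\<phi> y2) \<bullet> u - t * ((A *v w) \<bullet> u)\<bar>
        \<le> \<epsilon> * t^2 * ((2 * norm u + norm w) * norm u)"
      using t by (simp add: power2_eq_square mult_left_mono mult_ac)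
    moreover have "\<phi> (x + t *\<^sub>R u + t *\<^sub>R w) - \<phi> (x + t *\<^sub>R u) - \<phi> (x + t *\<^sub>R w) + \<phi> x
        - t^2 * ((A *v w) \<bullet> u) = t * ((D\<phi> y1 - D\<phi> y2) \<bullet> u - t * ((A *v w) \<bullet> u))"
      unfolding mvt y1_def y2_def by (simp add: power2_eq_square algebra_simps)
    ultimately show "\<bar>\<phi> (x + t *\<^sub>R u + t *\<^sub>R w) - \<phi> (x + t *\<^sub>R u) - \<phi> (x + t *\<^sub>R w) + \<phi> x
        - t^2 * ((A *v w) \<bullet> u)\<bar> \<le> \<epsilon> * t^2 * ((2 * norm u + norm w) * norm u)"
      using t by (simp add: abs_mult)
  qed
qed

text \<open>Schwarz's theorem: both \<open>(D\<^sup>2\<phi>(x) w) \<bullet> u\<close> and \<open>(D\<^sup>2\<phi>(x) u) \<bullet> w\<close> are the limit of the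
  same symmetric second difference quotient.\<close>
lemma C2_on_hessian_sym:
  fixes \<phi> :: "real^'n::finite \<Rightarrow> real"
  assumes C2: "C2_on G \<phi> D\<phi> D2\<phi>" and G: "open G" and x: "x \<in> G"
  shows "sym_mat (D2\<phi> x)"
proof -
  define A where "A = D2\<phi> x"
  have d\<phi>: "\<And>y. y \<in> G \<Longrightarrow> (\<phi> has_derivative (\<lambda>h. D\<phi> y \<bullet> h)) (at y)"
   and dD: "(D\<phi> has_derivative (\<lambda>h. A *v h)) (at x)" using C2 x unfolding C2_on_def A_def by auto
  have swap: "(A *v w) \<bullet> u = (A *v u) \<bullet> w" for u w
  proof -
    define a where "a = (A *v w) \<bullet> u"
    define b where "b = (A *v u) \<bullet> w"
    define C where "C = (2 * norm u + norm w) * norm u + (2 * norm w + norm u) * norm w"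
    have C: "0 \<le> C" unfolding C_def by auto
    have ab_bound: "\<bar>a - b\<bar> \<le> \<epsilon> * C" if e: "\<epsilon> > 0" for \<epsilon>
    proof -
      define \<Delta> where "\<Delta> t = \<phi> (x + t *\<^sub>R u + t *\<^sub>R w) - \<phi> (x + t *\<^sub>R u) - \<phi> (x + t *\<^sub>R w) + \<phi> x"
        for t
      have \<Delta>_sym: "\<Delta> t = \<phi> (x + t *\<^sub>R w + t *\<^sub>R u) - \<phi> (x + t *\<^sub>R w) - \<phi> (x + t *\<^sub>R u) + \<phi> x"
        for t by (simp add: \<Delta>_def add_ac)
      have "\<forall>\<^sub>F t in at_right 0. \<bar>\<Delta> t - t^2 * a\<bar> \<le> \<epsilon> * t^2 * ((2 * norm u + norm w) * norm u)"
        unfolding \<Delta>_def a_def by (rule second_difference_estimate[OF G x d\<phi> dD e])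
      moreover have "\<forall>\<^sub>F t in at_right 0. \<bar>\<Delta> t - t^2 * b\<bar> \<le> \<epsilon> * t^2 * ((2 * norm w + norm u) * norm w)"
        unfolding \<Delta>_sym b_def by (rule second_difference_estimate[OF G x d\<phi> dD e])
      ultimately have "\<forall>\<^sub>F t in at_right 0.
          \<bar>\<Delta> t - t^2 * a\<bar> \<le> \<epsilon> * t^2 * ((2 * norm u + norm w) * norm u) \<and>
          \<bar>\<Delta> t - t^2 * b\<bar> \<le> \<epsilon> * t^2 * ((2 * norm w + norm u) * norm w) \<and> 0 < t"
        by (intro eventually_conj eventually_at_right_less)
      then obtain t where t: "0 < t"
        and h1: "\<bar>\<Delta> t - t^2 * a\<bar> \<le> \<epsilon> * t^2 * ((2 * norm u + norm w) * norm u)"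
        and h2: "\<bar>\<Delta> t - t^2 * b\<bar> \<le> \<epsilon> * t^2 * ((2 * norm w + norm u) * norm w)"
        using eventually_happens'[OF trivial_limit_at_right_real] by blast
      have "(\<Delta> t - t^2 * b) - (\<Delta> t - t^2 * a) = t^2 * (a - b)" by (simp add: algebra_simps)
      then have "t^2 * \<bar>a - b\<bar> = \<bar>(\<Delta> t - t^2 * b) - (\<Delta> t - t^2 * a)\<bar>"
        by (simp add: abs_mult)
      also have "\<dots> \<le> t^2 * (\<epsilon> * C)"
        using abs_triangle_ineq4[of "\<Delta> t - t^2 * b" "\<Delta> t - t^2 * a"] h1 h2
        by (simp add: C_def algebra_simps)
      finally show ?thesis using t by simp
    qed
    have "\<bar>a - b\<bar> \<le> 0 + \<delta>" if "\<delta> > 0" for \<delta>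
    proof -
      have "\<bar>a - b\<bar> \<le> \<delta> / (C + 1) * C" using that C by (intro ab_bound) simp
      also have "\<dots> \<le> \<delta>" using that C by (simp add: field_simps)
      finally show ?thesis by simp
    qed
    then have "\<bar>a - b\<bar> \<le> 0" by (rule field_le_epsilon)
    then show ?thesis by (simp add: a_def b_def)
  qed
  have "A$i$j = A$j$i" for i j
    using swap[of "axis j 1" "axis i 1"] by (simp add: matrix_vector_mult_basis inner_commute[of "column _ A"] inner_axis')
  then show ?thesis unfolding A_def sym_mat_def by (simp add: vec_eq_iff transpose_def A_def)
qed

lemma C2_on_convex_hessian_psd:
  fixes \<phi> :: "real^'n::finite \<Rightarrow> real"
  assumes "C2_on G \<phi> D\<phi> D2\<phi>" "open G" "convex_on G \<phi>" "x \<in> G"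
  shows "psd_mat (D2\<phi> x)"
  using C2_on_hessian_sym[OF assms(1,2,4)] convex_on_hessian_nonneg[OF assms]
  by (simp add: psd_mat_def)

section \<open>Convexity of Bellman subsolutions\<close>

lemma compact_usc_attains_sup:
  fixes g :: "'a::metric_space \<Rightarrow> real"
  assumes K: "compact K" "K \<noteq> {}"
    and usc: "\<And>x t. x \<in> K \<Longrightarrow> g x < t \<Longrightarrow> \<exists>e>0. \<forall>y\<in>K. dist y x < e \<longrightarrow> g y < t"
  shows "\<exists>x\<in>K. \<forall>y\<in>K. g y \<le> g x"
proof (rule ccontr)
  assume "\<not> ?thesis"
  then have "\<forall>x\<in>K. \<exists>y\<in>K. g x < g y" by (auto simp: not_le)
  then obtain nx where nx: "\<And>x. x \<in> K \<Longrightarrow> nx x \<in> K \<and> g x < g (nx x)" by metis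
  then have "\<forall>x\<in>K. \<exists>e>0. \<forall>y\<in>K. dist y x < e \<longrightarrow> g y < g (nx x)"
    using usc by blast
  then obtain ee where ee: "\<And>x. x \<in> K \<Longrightarrow> ee x > 0 \<and> (\<forall>y\<in>K. dist y x < ee x \<longrightarrow> g y < g (nx x))"
    by metis
  have cover: "K \<subseteq> (\<Union>x\<in>K. ball x (ee x))" using ee by force
  obtain D where D: "D \<subseteq> K" "finite D" "K \<subseteq> (\<Union>x\<in>D. ball x (ee x))"
    by (rule compactE_image[OF K(1) _ cover]) auto
  then have "D \<noteq> {}" using K(2) by auto
  define m where "m = Max ((\<lambda>x. g (nx x)) ` D)"
  have "m \<in> (\<lambda>x. g (nx x)) ` D" unfolding m_def using D(2) \<open>D \<noteq> {}\<close> by (intro Max_in) auto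
  then obtain x0 where x0: "x0 \<in> D" "m = g (nx x0)" by auto
  have "nx x0 \<in> K" using nx x0(1) D(1) by blast
  then obtain x1 where x1: "x1 \<in> D" "nx x0 \<in> ball x1 (ee x1)" using D(3) by blast
  then have "m < g (nx x1)" using ee[of x1] D(1) \<open>nx x0 \<in> K\<close> x0(2) by (auto simp: dist_commute)
  moreover have "g (nx x1) \<le> m" unfolding m_def using D(2) x1(1) by (intro Max_ge) auto
  ultimately show False by simp
qed

lemma usc_on_diff_continuous:
  fixes u \<psi> :: "real^'n::finite \<Rightarrow> real"
  assumes usc: "usc_on \<Omega> u" and c: "continuous_on UNIV \<psi>" and x: "x \<in> \<Omega>" and lt: "u x - \<psi> x < t"
  shows "\<exists>e>0. \<forall>y\<in>\<Omega>. dist y x < e \<longrightarrow> u y - \<psi> y < t"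
proof -
  define \<eta> where "\<eta> = t - (u x - \<psi> x)"
  have \<eta>: "\<eta> > 0" using lt by (simp add: \<eta>_def)
  have "\<forall>\<^sub>F y in at x within \<Omega>. u y < u x + \<eta>/2"
    using usc x \<eta> unfolding usc_on_def by simp
  moreover have "isCont \<psi> x" using c by (simp add: continuous_on_eq_continuous_at)
  then have "(\<psi> \<longlongrightarrow> \<psi> x) (at x within \<Omega>)"
    unfolding isCont_def by (rule tendsto_mono[OF at_le, rotated]) simp
  then have "\<forall>\<^sub>F y in at x within \<Omega>. \<psi> x - \<eta>/2 < \<psi> y"
    using \<eta> by (intro order_tendstoD(1)) auto
  ultimately have "\<forall>\<^sub>F y in at x within \<Omega>. u y - \<psi> y < t"
    by eventually_elim (use \<eta>_def in linarith)
  then obtain e where e: "e > 0" "\<forall>y\<in>\<Omega>. y \<noteq> x \<and> dist y x < e \<longrightarrow> u y - \<psi> y < t"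
    unfolding eventually_at by blast
  have "u y - \<psi> y < t" if "y \<in> \<Omega>" "dist y x < e" for y
    using e(2) that lt by (cases "y = x") auto
  with e(1) show ?thesis by blast
qed

definition seg_coord :: "'a::real_inner \<Rightarrow> 'a \<Rightarrow> 'a \<Rightarrow> real" where
  "seg_coord a b y = ((y - a) \<bullet> (b - a)) / ((b - a) \<bullet> (b - a))"

definition seg_dist2 :: "'a::real_inner \<Rightarrow> 'a \<Rightarrow> 'a \<Rightarrow> real" where
  "seg_dist2 a b y = (norm (y - (a + seg_coord a b y *\<^sub>R (b - a))))^2"

definition seg_tube :: "'a::real_inner \<Rightarrow> 'a \<Rightarrow> real \<Rightarrow> 'a set" where
  "seg_tube a b \<rho> = {y. 0 \<le> seg_coord a b y \<and> seg_coord a b y \<le> 1 \<and> seg_dist2 a b y \<le> \<rho>^2}"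

lemma continuous_on_seg_coord [continuous_intros]: "continuous_on S (seg_coord a b)"
  unfolding seg_coord_def divide_inverse by (intro continuous_intros)

lemma continuous_on_seg_dist2 [continuous_intros]: "continuous_on S (seg_dist2 a b)"
  unfolding seg_dist2_def by (intro continuous_intros)

lemma seg_dist2_nonneg: "0 \<le> seg_dist2 a b y"
  by (simp add: seg_dist2_def)

lemma seg_coord_on_line: "a \<noteq> b \<Longrightarrow> seg_coord a b (a + s *\<^sub>R (b - a)) = s"
  by (simp add: seg_coord_def)

lemma seg_dist2_on_line: "a \<noteq> b \<Longrightarrow> seg_dist2 a b (a + s *\<^sub>R (b - a)) = 0"
  by (simp add: seg_dist2_def seg_coord_on_line)

lemma seg_dist2_eq:
  assumes "a \<noteq> b"
  shows "seg_dist2 a b y = (y - a) \<bullet> (y - a) - ((y - a) \<bullet> (b - a))^2 / ((b - a) \<bullet> (b - a))"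
proof -
  define h where "h = y - a"
  define c where "c = h \<bullet> (b - a)"
  define E where "E = (b - a) \<bullet> (b - a)"
  have E: "E > 0" using assms by (simp add: E_def)
  have "y - (a + seg_coord a b y *\<^sub>R (b - a)) = h - (c / E) *\<^sub>R (b - a)"
    by (simp add: seg_coord_def h_def c_def E_def algebra_simps)
  then have "seg_dist2 a b y = (h - (c / E) *\<^sub>R (b - a)) \<bullet> (h - (c / E) *\<^sub>R (b - a))"
    by (simp add: seg_dist2_def power2_norm_eq_inner)
  also have "\<dots> = h \<bullet> h - 2 * (c / E) * c + (c / E) * (c / E) * E"
    by (simp add: inner_diff_left inner_diff_right c_def E_def inner_commute)
  also have "\<dots> = h \<bullet> h - c^2 / E" using E by (simp add: field_simps power2_eq_square)
  finally show ?thesis by (simp add: h_def c_def E_def)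
qed

lemma dist_seg_proj_le:
  assumes "seg_dist2 a b y \<le> \<rho>^2" "0 \<le> \<rho>"
  shows "dist y (a + seg_coord a b y *\<^sub>R (b - a)) \<le> \<rho>"
  using assms power2_le_imp_le by (fastforce simp: seg_dist2_def dist_norm)

lemma seg_proj_in_segment:
  "0 \<le> seg_coord a b y \<Longrightarrow> seg_coord a b y \<le> 1 \<Longrightarrow> a + seg_coord a b y *\<^sub>R (b - a) \<in> closed_segment a b"
  unfolding in_segment by (rule exI[of _ "seg_coord a b y"]) (simp add: algebra_simps)

lemma compact_seg_tube:
  fixes a b :: "'a::euclidean_space"
  assumes "0 \<le> \<rho>"
  shows "compact (seg_tube a b \<rho>)"
proof -
  have "closed (seg_tube a b \<rho>)"
    unfolding seg_tube_def by (intro closed_Collect_conj closed_Collect_le continuous_intros)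
  moreover have "seg_tube a b \<rho> \<subseteq> cball a (norm (b - a) + \<rho>)"
  proof
    fix y assume "y \<in> seg_tube a b \<rho>"
    then have p: "0 \<le> seg_coord a b y" "seg_coord a b y \<le> 1" and q: "seg_dist2 a b y \<le> \<rho>^2"
      by (auto simp: seg_tube_def)
    have "dist y (a + seg_coord a b y *\<^sub>R (b - a)) \<le> \<rho>" using q assms by (rule dist_seg_proj_le)
    moreover have "dist a (a + seg_coord a b y *\<^sub>R (b - a)) \<le> norm (b - a)"
      using p by (simp add: dist_norm mult_left_le_one_le)
    ultimately show "y \<in> cball a (norm (b - a) + \<rho>)"
      using dist_triangle3[of a y "a + seg_coord a b y *\<^sub>R (b - a)"] by (simp add: dist_commute)
  qed
  then have "bounded (seg_tube a b \<rho>)" using bounded_cball bounded_subset by blast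
  ultimately show ?thesis by (simp add: compact_eq_bounded_closed)
qed

lemma seg_tube_subset_open:
  fixes a b :: "'a::euclidean_space"
  assumes "open \<Omega>" "convex \<Omega>" "a \<in> \<Omega>" "b \<in> \<Omega>"
  obtains \<epsilon> where "\<epsilon> > 0" "\<And>\<rho>. 0 \<le> \<rho> \<Longrightarrow> \<rho> \<le> \<epsilon> \<Longrightarrow> seg_tube a b \<rho> \<subseteq> \<Omega>"
proof -
  obtain \<epsilon> where \<epsilon>: "\<epsilon> > 0" "(\<Union>c\<in>closed_segment a b. cball c \<epsilon>) \<subseteq> \<Omega>"
    using compact_subset_open_imp_cball_epsilon_subset[OF compact_segment assms(1)]
      closed_segment_subset[OF assms(3,4,2)] by metis
  have "seg_tube a b \<rho> \<subseteq> \<Omega>" if "0 \<le> \<rho>" "\<rho> \<le> \<epsilon>" for \<rho>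
  proof
    fix y assume "y \<in> seg_tube a b \<rho>"
    then have "a + seg_coord a b y *\<^sub>R (b - a) \<in> closed_segment a b"
      and "dist y (a + seg_coord a b y *\<^sub>R (b - a)) \<le> \<rho>"
      using seg_proj_in_segment dist_seg_proj_le that(1) by (auto simp: seg_tube_def)
    then show "y \<in> \<Omega>" using \<epsilon>(2) that(2) by (fastforce simp: dist_commute)
  qed
  with \<epsilon>(1) that show ?thesis by blast
qed

lemma local_max_at_seg_tube_interior:
  assumes T: "seg_tube a b \<rho> \<subseteq> \<Omega>" and max: "\<And>y. y \<in> seg_tube a b \<rho> \<Longrightarrow> g y \<le> g x"
    and x: "0 < seg_coord a b x" "seg_coord a b x < 1" "seg_dist2 a b x < \<rho>^2"
  shows "local_max_at \<Omega> g x"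
proof -
  define U where "U = {y. 0 < seg_coord a b y \<and> seg_coord a b y < 1 \<and> seg_dist2 a b y < \<rho>^2}"
  have "open U"
    unfolding U_def by (intro open_Collect_conj open_Collect_less continuous_intros)
  moreover have "x \<in> U" using x by (simp add: U_def)
  ultimately obtain r where "r > 0" "ball x r \<subseteq> U" using open_contains_ball by blast
  moreover have "U \<subseteq> seg_tube a b \<rho>" by (auto simp: U_def seg_tube_def)
  ultimately show ?thesis unfolding local_max_at_def using max by blast
qed

lemma usc_on_diff_continuous_attains_sup:
  fixes u \<psi> :: "real^'n::finite \<Rightarrow> real"
  assumes "usc_on \<Omega> u" "continuous_on UNIV \<psi>" "compact T" "T \<noteq> {}" "T \<subseteq> \<Omega>"
  obtains x where "x \<in> T" "\<And>y. y \<in> T \<Longrightarrow> u y - \<psi> y \<le> u x - \<psi> x"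
proof -
  have "\<exists>e>0. \<forall>y\<in>T. dist y x < e \<longrightarrow> u y - \<psi> y < t" if "x \<in> T" "u x - \<psi> x < t" for x t
    using usc_on_diff_continuous[OF assms(1,2)] that assms(5) by blast
  then have "\<exists>x\<in>T. \<forall>y\<in>T. u y - \<psi> y \<le> u x - \<psi> x"
    using compact_usc_attains_sup[OF assms(3,4), of "\<lambda>y. u y - \<psi> y"] by blast
  then show ?thesis using that by blast
qed

lemma quadratic_C2_on:
  fixes S :: "'n::finite mat"
  assumes symS: "sym_mat S"
  shows "C2_on G (\<lambda>y. \<alpha> + w \<bullet> (y - a) + (1/2) * ((y - a) \<bullet> (S *v (y - a))))
                 (\<lambda>y. w + S *v (y - a)) (\<lambda>y. S)"
proof -
  have sym: "p \<bullet> (S *v h) = (S *v p) \<bullet> h" for p h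
  proof -
    have "p \<bullet> (S *v h) = (p v* S) \<bullet> h" by (simp add: dot_lmul_matrix)
    also have "p v* S = transpose S *v p" by (simp add: transpose_matrix_vector)
    also have "transpose S = S" using symS by (simp add: sym_mat_def)
    finally show ?thesis .
  qed
  have dS: "((\<lambda>y. S *v (y - a)) has_derivative (\<lambda>h. S *v h)) (at y)" for y
  proof -
    have "((\<lambda>y. y - a) has_derivative (\<lambda>h. h)) (at y)" by (intro derivative_eq_intros) auto
    from bounded_linear.has_derivative[OF matrix_vector_mul_bounded_linear[of S] this]
    show ?thesis .
  qed
  have "((\<lambda>y. \<alpha> + w \<bullet> (y - a) + (1/2) * ((y - a) \<bullet> (S *v (y - a)))) has_derivative
      (\<lambda>h. 0 + w \<bullet> h + (1/2) * ((y - a) \<bullet> (S *v h) + h \<bullet> (S *v (y - a))))) (at y)" for y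
  proof -
    have da: "((\<lambda>y. y - a) has_derivative (\<lambda>h. h)) (at y)" by (intro derivative_eq_intros) auto
    show ?thesis
      by (rule has_derivative_add[OF has_derivative_add[OF has_derivative_const
            bounded_linear.has_derivative[OF bounded_linear_inner_right da]]
            has_derivative_mult_right[OF has_derivative_inner[OF da dS]]])
  qed
  moreover have "(\<lambda>h. 0 + w \<bullet> h + (1/2) * ((y - a) \<bullet> (S *v h) + h \<bullet> (S *v (y - a))))
      = (\<lambda>h. (w + S *v (y - a)) \<bullet> h)" for y
  proof
    fix h
    have "(y - a) \<bullet> (S *v h) = (S *v (y - a)) \<bullet> h" "h \<bullet> (S *v (y - a)) = (S *v (y - a)) \<bullet> h"
      by (rule sym, rule inner_commute)
    then show "0 + w \<bullet> h + (1/2) * ((y - a) \<bullet> (S *v h) + h \<bullet> (S *v (y - a))) = (w + S *v (y - a)) \<bullet> h"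
      by (simp add: inner_add_left)
  qed
  moreover have "((\<lambda>y. w + S *v (y - a)) has_derivative (\<lambda>h. S *v h)) (at y)" for y
    by (rule has_derivative_eq_rhs[OF has_derivative_add[OF has_derivative_const dS]]) simp
  ultimately show ?thesis unfolding C2_on_def by (simp add: continuous_on_const)
qed

lemma seg_quadratic_test_function:
  fixes a b :: "real^'n::finite"
  assumes "a \<noteq> b"
  obtains S :: "'n mat" and w where "sym_mat S" "(b - a) \<bullet> (S *v (b - a)) = - 2 * \<sigma>"
    "\<And>y. \<alpha> + w \<bullet> (y - a) + (1/2) * ((y - a) \<bullet> (S *v (y - a)))
        = \<alpha> + \<beta> * seg_coord a b y + \<sigma> * (seg_coord a b y * (1 - seg_coord a b y))
          + K * seg_dist2 a b y"
proof -
  define e where "e = b - a"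
  define E where "E = e \<bullet> e"
  have E: "E > 0" using assms by (simp add: E_def e_def)
  define \<mu> where "\<mu> = \<sigma> / E^2 + K / E"
  define S :: "'n mat" where "S = (2*K) *\<^sub>R mat 1 - (2*\<mu>) *\<^sub>R outer_prod e"
  define w where "w = ((\<beta> + \<sigma>) / E) *\<^sub>R e"
  have quad: "h \<bullet> (S *v h) = 2*K*(h \<bullet> h) - 2*\<mu>*(e \<bullet> h)^2" for h
    by (simp add: S_def matrix_vector_mult_diff_rdistrib outer_prod_mult_vec inner_diff_right
        inner_commute power2_eq_square flip: scaleR_matrix_vector_assoc)
  have "sym_mat S"
    unfolding sym_mat_def S_def by (simp add: vec_eq_iff transpose_def mat_def outer_prod_def mult.commute)
  moreover have "(b - a) \<bullet> (S *v (b - a)) = - 2 * \<sigma>"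
    using E by (simp add: quad flip: e_def E_def) (simp add: \<mu>_def field_simps power2_eq_square)
  moreover have "\<alpha> + w \<bullet> (y - a) + (1/2) * ((y - a) \<bullet> (S *v (y - a)))
        = \<alpha> + \<beta> * seg_coord a b y + \<sigma> * (seg_coord a b y * (1 - seg_coord a b y))
          + K * seg_dist2 a b y" for y
  proof -
    define h where "h = y - a"
    define c where "c = e \<bullet> h"
    have "\<alpha> + w \<bullet> (y - a) + (1/2) * ((y - a) \<bullet> (S *v (y - a)))
        = \<alpha> + ((\<beta> + \<sigma>) / E) * c + (1/2) * (2*K*(h \<bullet> h) - 2*\<mu>*c^2)"
      by (simp add: quad w_def flip: h_def) (simp add: c_def inner_commute)
    also have "\<dots> = \<alpha> + \<beta> * (c / E) + \<sigma> * (c / E * (1 - c / E)) + K * (h \<bullet> h - c^2 / E)"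
      using E by (simp add: \<mu>_def field_simps power2_eq_square)
    finally show ?thesis
      by (simp add: seg_dist2_eq[OF assms] seg_coord_def h_def c_def e_def E_def inner_commute)
  qed
  ultimately show ?thesis using that by blast
qed

lemma usc_seg_tube_radius:
  fixes u :: "real^'n::finite \<Rightarrow> real"
  assumes op: "open \<Omega>" and cvx: "convex \<Omega>" and usc: "usc_on \<Omega> u"
    and a: "a \<in> \<Omega>" and b: "b \<in> \<Omega>" and \<eta>: "\<eta> > 0"
  obtains \<rho> where "\<rho> > 0" "seg_tube a b \<rho> \<subseteq> \<Omega>"
    "\<And>y. y \<in> \<Omega> \<Longrightarrow> dist y a \<le> \<rho> \<Longrightarrow> u y < u a + \<eta>"
    "\<And>y. y \<in> \<Omega> \<Longrightarrow> dist y b \<le> \<rho> \<Longrightarrow> u y < u b + \<eta>"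
proof -
  obtain ra where ra: "ra > 0" "\<forall>y\<in>\<Omega>. dist y a < ra \<longrightarrow> u y < u a + \<eta>"
    using usc_on_diff_continuous[OF usc continuous_on_const a, of 0 "u a + \<eta>"] \<eta> by auto
  obtain rb where rb: "rb > 0" "\<forall>y\<in>\<Omega>. dist y b < rb \<longrightarrow> u y < u b + \<eta>"
    using usc_on_diff_continuous[OF usc continuous_on_const b, of 0 "u b + \<eta>"] \<eta> by auto
  obtain \<epsilon> where \<epsilon>: "\<epsilon> > 0" "\<And>\<rho>. 0 \<le> \<rho> \<Longrightarrow> \<rho> \<le> \<epsilon> \<Longrightarrow> seg_tube a b \<rho> \<subseteq> \<Omega>"
    using seg_tube_subset_open[OF op cvx a b] by blast
  show ?thesis
    by (rule that[of "min \<epsilon> (min ra rb) / 2"]) (use \<epsilon> ra rb in auto)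
qed

text \<open>If \<open>u\<close> lay strictly above the chord over \<open>[a, b]\<close> at \<open>a + s (b - a)\<close>, then \<open>u\<close> minus the
  test function \<open>chord + \<eta> p (1 - p) + K q\<close> (\<open>\<eta>\<close> the gap, \<open>K\<close> large) would attain its maximum over a
  thin tube around the segment in the interior of the tube, where the test function is strictly
  concave along \<open>b - a\<close>.\<close>
lemma usc_below_chord_if_hessian_test:
  fixes u :: "real^'n::finite \<Rightarrow> real"
  assumes op: "open \<Omega>" and cvx: "convex \<Omega>" and usc: "usc_on \<Omega> u"
    and test: "\<And>\<phi> D\<phi> D2\<phi> x v. C2_on \<Omega> \<phi> D\<phi> D2\<phi> \<Longrightarrow> x \<in> \<Omega> \<Longrightarrow>
                local_max_at \<Omega> (\<lambda>y. u y - \<phi> y) x \<Longrightarrow> 0 \<le> v \<bullet> (D2\<phi> x *v v)"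
    and a: "a \<in> \<Omega>" and b: "b \<in> \<Omega>" and ab: "a \<noteq> b" and s: "0 < s" "s < 1"
  shows "u (a + s *\<^sub>R (b - a)) \<le> (1 - s) * u a + s * u b"
proof (rule ccontr)
  assume above: "\<not> ?thesis"
  define p where "p = seg_coord a b"
  define q where "q = seg_dist2 a b"
  define chord where "chord y = u a + (u b - u a) * p y" for y
  define z where "z = a + s *\<^sub>R (b - a)"
  define \<eta> where "\<eta> = u z - chord z"
  have pz: "p z = s" and qz: "q z = 0"
    using ab by (simp_all add: p_def q_def z_def seg_coord_on_line seg_dist2_on_line)
  have \<eta>: "\<eta> > 0" using above pz by (simp add: \<eta>_def chord_def z_def algebra_simps)
  obtain \<rho> where \<rho>: "\<rho> > 0" "seg_tube a b \<rho> \<subseteq> \<Omega>"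
    "\<And>y. y \<in> \<Omega> \<Longrightarrow> dist y a \<le> \<rho> \<Longrightarrow> u y < u a + \<eta>/2"
    "\<And>y. y \<in> \<Omega> \<Longrightarrow> dist y b \<le> \<rho> \<Longrightarrow> u y < u b + \<eta>/2"
    using usc_seg_tube_radius[OF op cvx usc a b, of "\<eta>/2"] \<eta> by auto
  define T where "T = seg_tube a b \<rho>"
  have T\<Omega>: "T \<subseteq> \<Omega>" using \<rho>(2) by (simp add: T_def)
  have compT: "compact T" unfolding T_def using \<rho>(1) by (intro compact_seg_tube) simp
  have zT: "z \<in> T" using pz qz s by (simp add: T_def seg_tube_def p_def q_def)
  have "continuous_on UNIV chord" unfolding chord_def p_def by (intro continuous_intros)
  then obtain y1 where y1: "\<And>y. y \<in> T \<Longrightarrow> u y - chord y \<le> u y1 - chord y1"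
    using usc_on_diff_continuous_attains_sup[OF usc _ compT _ T\<Omega>] zT by blast
  define K where "K = (\<bar>u y1 - chord y1\<bar> + 1) / \<rho>^2"
  have K: "0 \<le> K" "K * \<rho>^2 = \<bar>u y1 - chord y1\<bar> + 1" using \<rho> by (simp_all add: K_def)
  obtain S w where S: "sym_mat S" "(b - a) \<bullet> (S *v (b - a)) = - 2 * \<eta>" and \<phi>_eq:
    "\<And>y. u a + w \<bullet> (y - a) + (1/2) * ((y - a) \<bullet> (S *v (y - a)))
        = u a + (u b - u a) * p y + \<eta> * (p y * (1 - p y)) + K * q y"
    using seg_quadratic_test_function[OF ab] unfolding p_def q_def by metis
  define \<phi> where "\<phi> y = u a + w \<bullet> (y - a) + (1/2) * ((y - a) \<bullet> (S *v (y - a)))" for y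
  have \<phi>: "\<phi> y = chord y + \<eta> * (p y * (1 - p y)) + K * q y" for y
    unfolding \<phi>_def \<phi>_eq chord_def by simp
  have C2: "C2_on G \<phi> (\<lambda>y. w + S *v (y - a)) (\<lambda>y. S)" for G
    unfolding \<phi>_def by (rule quadratic_C2_on[OF S(1)])
  have "continuous_on UNIV \<phi>"
    using C2[of UNIV] unfolding C2_on_def
    by (intro continuous_at_imp_continuous_on ballI has_derivative_continuous) blast
  then obtain ys where ys: "ys \<in> T" "\<And>y. y \<in> T \<Longrightarrow> u y - \<phi> y \<le> u ys - \<phi> ys"
    using usc_on_diff_continuous_attains_sup[OF usc _ compT _ T\<Omega>] zT by blast
  have "s * (1 - s) \<le> 1/4" using zero_le_power2[of "s - 1/2"] by (simp add: power2_eq_square algebra_simps)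
  then have "\<eta> * (s * (1 - s)) \<le> \<eta> * (1/4)" using \<eta> by (intro mult_left_mono) auto
  moreover have "u z - \<phi> z = \<eta> - \<eta> * (s * (1 - s))" by (simp add: \<phi> pz qz \<eta>_def)
  ultimately have "\<eta> / 2 < u z - \<phi> z" using \<eta> by linarith
  then have gap: "\<eta> / 2 < u ys - \<phi> ys" using ys(2)[OF zT] by linarith
  have ysT: "0 \<le> p ys" "p ys \<le> 1" "q ys \<le> \<rho>^2" and ys\<Omega>: "ys \<in> \<Omega>"
    using ys(1) T\<Omega> by (auto simp: T_def seg_tube_def p_def q_def)
  have "0 \<le> p ys * (1 - p ys)" using ysT by simp
  then have "0 \<le> \<eta> * (p ys * (1 - p ys)) + K * q ys"
    using K(1) \<eta> seg_dist2_nonneg[of a b ys] by (simp add: q_def)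
  then have chord_le: "chord ys \<le> \<phi> ys" by (simp add: \<phi>)
  have dist_le: "dist ys (a + p ys *\<^sub>R (b - a)) \<le> \<rho>"
    using dist_seg_proj_le[of a b ys \<rho>] ysT \<rho> by (simp add: p_def q_def)
  have "p ys \<noteq> 0"
  proof
    assume "p ys = 0"
    then have "u ys < chord ys + \<eta>/2" using \<rho>(3)[OF ys\<Omega>] dist_le by (simp add: chord_def)
    then show False using gap chord_le by simp
  qed
  moreover have "p ys \<noteq> 1"
  proof
    assume "p ys = 1"
    then have "u ys < chord ys + \<eta>/2" using \<rho>(4)[OF ys\<Omega>] dist_le by (simp add: chord_def)
    then show False using gap chord_le by simp
  qed
  moreover have "q ys \<noteq> \<rho>^2"
  proof
    assume "q ys = \<rho>^2"
    then have "u ys - \<phi> ys = (u ys - chord ys) - \<eta> * (p ys * (1 - p ys)) - K * \<rho>^2"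
      by (simp add: \<phi>)
    moreover have "0 \<le> \<eta> * (p ys * (1 - p ys))" using \<open>0 \<le> p ys * (1 - p ys)\<close> \<eta> by simp
    ultimately show False using y1[OF ys(1)] gap K(2) \<eta> abs_ge_self[of "u y1 - chord y1"] by linarith
  qed
  ultimately have "local_max_at \<Omega> (\<lambda>y. u y - \<phi> y) ys"
    using local_max_at_seg_tube_interior[of a b \<rho> \<Omega> "\<lambda>y. u y - \<phi> y" ys] ys ysT T\<Omega>
    by (auto simp: T_def p_def q_def)
  from test[OF C2 ys\<Omega> this, of "b - a"] show False using S(2) \<eta> by simp
qed

lemma convex_on_if_hessian_test:
  fixes u :: "real^'n::finite \<Rightarrow> real"
  assumes "open \<Omega>" and cvx: "convex \<Omega>" and "usc_on \<Omega> u"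
    and "\<And>\<phi> D\<phi> D2\<phi> x v. C2_on \<Omega> \<phi> D\<phi> D2\<phi> \<Longrightarrow> x \<in> \<Omega> \<Longrightarrow>
                local_max_at \<Omega> (\<lambda>y. u y - \<phi> y) x \<Longrightarrow> 0 \<le> v \<bullet> (D2\<phi> x *v v)"
  shows "convex_on \<Omega> u"
proof (rule convex_onI[OF _ cvx])
  fix t :: real and x y assume t: "0 < t" "t < 1" and xy: "x \<in> \<Omega>" "y \<in> \<Omega>"
  show "u ((1 - t) *\<^sub>R x + t *\<^sub>R y) \<le> (1 - t) * u x + t * u y"
  proof (cases "x = y")
    case True
    then show ?thesis by (simp add: algebra_simps flip: scaleR_left_distrib)
  next
    case False
    have "u (x + t *\<^sub>R (y - x)) \<le> (1 - t) * u x + t * u y"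
      by (rule usc_below_chord_if_hessian_test[OF assms(1-3) _ xy False t]) (rule assms(4))
    moreover have "(1 - t) *\<^sub>R x + t *\<^sub>R y = x + t *\<^sub>R (y - x)" by (simp add: algebra_simps)
    ultimately show ?thesis by simp
  qed
qed

lemma bellman_subsolution_convex:
  fixes \<Omega> :: "(real^'n::finite) set" and f u :: "real^'n \<Rightarrow> real"
  assumes "2 \<le> CARD('n)" "open \<Omega>" "convex \<Omega>" "\<forall>x\<in>\<Omega>. 0 \<le> f x"
    and sub: "visc_sub \<Omega> (\<lambda>A x. bellmanH A (f x)) u"
  shows "convex_on \<Omega> u"
proof (rule convex_on_if_hessian_test[OF assms(2,3)])
  show "usc_on \<Omega> u" using sub by (simp add: visc_sub_def)
  show "0 \<le> v \<bullet> (D2\<phi> x *v v)"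
    if "C2_on \<Omega> \<phi> D\<phi> D2\<phi>" "x \<in> \<Omega>" "local_max_at \<Omega> (\<lambda>y. u y - \<phi> y) x" for \<phi> D\<phi> D2\<phi> x v
    using sub that assms(1,4) bellmanH_nonpos_imp_quadratic_form_nonneg[of "f x"]
    unfolding visc_sub_def by blast
qed

theorem theorem3p5:
  fixes \<Omega> :: "(real^'n::finite) set"
    and f u :: "real^'n \<Rightarrow> real"
  assumes "CARD('n) \<ge> 2"
    and "bounded \<Omega>" and "open \<Omega>" and "strictly_convex_set \<Omega>"
    and "continuous_on \<Omega> f" and "\<forall>x\<in>\<Omega>. f x \<ge> 0"
    and "visc_sol \<Omega> (\<lambda>A x. bellmanH A (f x)) u"
  shows "visc_sol_cvx \<Omega> (\<lambda>A x. mongeM A (f x)) u"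
proof -
  have sub: "visc_sub \<Omega> (\<lambda>A x. bellmanH A (f x)) u"
   and super: "visc_super \<Omega> (\<lambda>A x. bellmanH A (f x)) u"
    using assms(7) by (auto simp: visc_sol_def)
  have "convex \<Omega>" using assms(4) by (simp add: strictly_convex_set_def)
  then have "convex_on \<Omega> u" using bellman_subsolution_convex[OF assms(1,3) _ assms(6) sub] by blast
  moreover have hessian_psd: "psd_mat (D2\<phi> x)"
    if "C2_on \<Omega> \<phi> D\<phi> D2\<phi>" "convex_on \<Omega> \<phi>" "x \<in> \<Omega>" for \<phi> D\<phi> D2\<phi> x
    using C2_on_convex_hessian_psd[OF that(1) assms(3) that(2,3)] .
  moreover have "mongeM (D2\<phi> x) (f x) \<le> 0"
    if "C2_on \<Omega> \<phi> D\<phi> D2\<phi>" "convex_on \<Omega> \<phi>" "x \<in> \<Omega>" "local_max_at \<Omega> (\<lambda>y. u y - \<phi> y) x"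
    for \<phi> D\<phi> D2\<phi> x
    using sub that assms(6) by (intro mongeM_nonpos_if_bellmanH_nonpos hessian_psd) (auto simp: visc_sub_def)
  moreover have "0 \<le> mongeM (D2\<phi> x) (f x)"
    if "C2_on \<Omega> \<phi> D\<phi> D2\<phi>" "convex_on \<Omega> \<phi>" "x \<in> \<Omega>" "local_min_at \<Omega> (\<lambda>y. u y - \<phi> y) x"
    for \<phi> D\<phi> D2\<phi> x
    using super that assms(6) by (intro mongeM_nonneg_if_bellmanH_nonneg hessian_psd) (auto simp: visc_super_def)
  ultimately show ?thesis
    using sub super unfolding visc_sol_cvx_def visc_sub_cvx_def visc_super_cvx_def visc_sub_def visc_super_def
    by blast
qed

end
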